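(* Let $T=\{(x,y)\in\mathbb{R}^2:x+y>0\}$ and let $M\colon T\to\mathbf{Vec}$ be pointwise finite-dimensional, middle exact and indecomposable. If there exist $x\le x'$, $y\le y'$ with $a=(x,y)$, $b=(x,y')$, $c=(x',y)$, $d=(x',y')$ all in $T$ such that $M_b\oplus M_c\xrightarrow{M(b\le d)-M(c\le d)}M_d$ is not surjective, then $M\cong k_{J\cap T}$ for some block $J\subseteq\mathbb{R}^2$ of type bb.
   Context: $T$ has the product order from $\mathbb{R}^2$. Middle exact on $T$: for all such $a,b,c,d\in T$ the sequence $M_a\xrightarrow{(M(a\le b),M(a\le c))}M_b\oplus M_c\xrightarrow{M(b\le d)-M(c\le d)}M_d$ is exact at the middle. A block of type bb in $\mathbb{R}^2$ is $J_1\times J_2$ with $J_1,J_2\subseteq\mathbb{R}$ non-empty upward-closed. $k_B$ is $k$ on $B$, $0$ elsewhere, identity maps within $B$ and zero otherwise. *)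

theory Defs
  imports Complex_Main "HOL-Library.Product_Order"
begin

text \<open>All spaces M_t are subspaces V t of one ambient
  'k-vector space of type 'v (with scalar multiplication sc); the structure map M(s \<le> t)
  is F s t restricted to V s.  The order on real \<times> real is the product order
  (HOL-Library.Product_Order).\<close>

definition lin_on :: "('k::field \<Rightarrow> 'v::ab_group_add \<Rightarrow> 'v) \<Rightarrow> ('k \<Rightarrow> 'w::ab_group_add \<Rightarrow> 'w)
    \<Rightarrow> 'v set \<Rightarrow> ('v \<Rightarrow> 'w) \<Rightarrow> bool" where
  "lin_on sc1 sc2 A f \<longleftrightarrow>
     (\<forall>x\<in>A. \<forall>y\<in>A. f (x + y) = f x + f y) \<and> (\<forall>c. \<forall>x\<in>A. f (sc1 c x) = sc2 c (f x))"

definition pmod :: "('k::field \<Rightarrow> 'v::ab_group_add \<Rightarrow> 'v) \<Rightarrow> ('a::order) set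
    \<Rightarrow> ('a \<Rightarrow> 'v set) \<Rightarrow> ('a \<Rightarrow> 'a \<Rightarrow> 'v \<Rightarrow> 'v) \<Rightarrow> bool" where
  "pmod sc T V F \<longleftrightarrow>
     vector_space sc \<and>
     (\<forall>t\<in>T. module.subspace sc (V t)) \<and>
     (\<forall>s\<in>T. \<forall>t\<in>T. s \<le> t \<longrightarrow> (\<forall>x\<in>V s. F s t x \<in> V t) \<and> lin_on sc sc (V s) (F s t)) \<and>
     (\<forall>t\<in>T. \<forall>x\<in>V t. F t t x = x) \<and>
     (\<forall>r\<in>T. \<forall>s\<in>T. \<forall>t\<in>T. r \<le> s \<longrightarrow> s \<le> t \<longrightarrow> (\<forall>x\<in>V r. F s t (F r s x) = F r t x))"

definition pfd :: "('k::field \<Rightarrow> 'v::ab_group_add \<Rightarrow> 'v) \<Rightarrow> 'a set \<Rightarrow> ('a \<Rightarrow> 'v set) \<Rightarrow> bool" where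
  "pfd sc T V \<longleftrightarrow> (\<forall>t\<in>T. \<exists>B. finite B \<and> B \<subseteq> V t \<and> module.span sc B = V t)"

definition middle_exact :: "(real \<times> real) set \<Rightarrow> (real \<times> real \<Rightarrow> 'v::ab_group_add set)
    \<Rightarrow> (real \<times> real \<Rightarrow> real \<times> real \<Rightarrow> 'v \<Rightarrow> 'v) \<Rightarrow> bool" where
  "middle_exact T V F \<longleftrightarrow>
     (\<forall>x x' y y'. x \<le> x' \<longrightarrow> y \<le> y' \<longrightarrow>
        (x, y) \<in> T \<longrightarrow> (x, y') \<in> T \<longrightarrow> (x', y) \<in> T \<longrightarrow> (x', y') \<in> T \<longrightarrow>
        (let a = (x, y); b = (x, y'); c = (x', y); d = (x', y') in
          (\<lambda>v. (F a b v, F a c v)) ` V a =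
          {(u, w). u \<in> V b \<and> w \<in> V c \<and> F b d u - F c d w = 0}))"

definition indecomposable :: "('k::field \<Rightarrow> 'v::ab_group_add \<Rightarrow> 'v) \<Rightarrow> 'a::order set
    \<Rightarrow> ('a \<Rightarrow> 'v set) \<Rightarrow> ('a \<Rightarrow> 'a \<Rightarrow> 'v \<Rightarrow> 'v) \<Rightarrow> bool" where
  "indecomposable sc T V F \<longleftrightarrow>
     (\<exists>t\<in>T. V t \<noteq> {0}) \<and>
     (\<forall>U W. (\<forall>t\<in>T. module.subspace sc (U t) \<and> module.subspace sc (W t) \<and>
                U t \<inter> W t = {0} \<and> {u + w | u w. u \<in> U t \<and> w \<in> W t} = V t) \<and>
            (\<forall>s\<in>T. \<forall>t\<in>T. s \<le> t \<longrightarrow> (\<forall>x\<in>U s. F s t x \<in> U t) \<and> (\<forall>x\<in>W s. F s t x \<in> W t))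
        \<longrightarrow> (\<forall>t\<in>T. U t = {0}) \<or> (\<forall>t\<in>T. W t = {0}))"

definition pmod_iso :: "('k::field \<Rightarrow> 'v::ab_group_add \<Rightarrow> 'v) \<Rightarrow> 'a::order set
    \<Rightarrow> ('a \<Rightarrow> 'v set) \<Rightarrow> ('a \<Rightarrow> 'a \<Rightarrow> 'v \<Rightarrow> 'v)
    \<Rightarrow> ('k \<Rightarrow> 'w::ab_group_add \<Rightarrow> 'w) \<Rightarrow> ('a \<Rightarrow> 'w set) \<Rightarrow> ('a \<Rightarrow> 'a \<Rightarrow> 'w \<Rightarrow> 'w) \<Rightarrow> bool" where
  "pmod_iso sc1 T V1 F1 sc2 V2 F2 \<longleftrightarrow>
     (\<exists>\<phi>. (\<forall>t\<in>T. lin_on sc1 sc2 (V1 t) (\<phi> t) \<and> bij_betw (\<phi> t) (V1 t) (V2 t)) \<and>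
          (\<forall>s\<in>T. \<forall>t\<in>T. s \<le> t \<longrightarrow> (\<forall>x\<in>V1 s. \<phi> t (F1 s t x) = F2 s t (\<phi> s x))))"

definition kB_space :: "'a set \<Rightarrow> 'a \<Rightarrow> 'k::field set" where
  "kB_space B t = (if t \<in> B then UNIV else {0})"

definition kB_map :: "'a set \<Rightarrow> 'a \<Rightarrow> 'a \<Rightarrow> 'k::field \<Rightarrow> 'k" where
  "kB_map B s t x = (if s \<in> B \<and> t \<in> B then x else 0)"

definition upclosed :: "real set \<Rightarrow> bool" where
  "upclosed J \<longleftrightarrow> (\<forall>x\<in>J. \<forall>y. x \<le> y \<longrightarrow> y \<in> J)"

definition block_bb :: "(real \<times> real) set \<Rightarrow> bool" where
  "block_bb J \<longleftrightarrow> (\<exists>J1 J2. J1 \<noteq> {} \<and> J2 \<noteq> {} \<and> upclosed J1 \<and> upclosed J2 \<and> J = J1 \<times> J2)"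

end

theory Submission
  imports Defs
begin

text \<open>
  In the quadrant
  above a, middle exactness makes the image E (edge_img) of the left and bottom edges of the quadrant behave
  like a cokernel: it reflects along structure maps, and two vectors that agree modulo E have a
  common preimage modulo E at the componentwise minimum of their sources. Minimising, by finite
  dimensionality, the subspaces of M_d reached modulo E (reach) from the top and the right edge of the
  square gives a vector z0 \<notin> E(d) and an upset J1 \<times> J2 of type bb such that z0 is reached from the
  whole block below d, while no image of z0 above d comes from outside the block.
  A Mittag-Leffler argument along the diagonal above d produces a natural functional
  phi: M \<rightarrow> k vanishing outside the block with phi(z0) = 1, and a second one along a sequence
  descending into the block produces a natural section of phi over the block. Then M is the direct
  sum of this section and ker phi, so indecomposability gives ker phi = 0 and M \<cong> k_(J1 \<times> J2).
\<close>

section \<open>Linear algebra\<close>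

context vector_space
begin

lemma independent_card_le_dim:
  assumes "subspace S" "S \<subseteq> span W" "finite W" "independent C" "C \<subseteq> S"
  shows "finite C \<and> card C \<le> dim S"
proof -
  obtain B where B: "B \<subseteq> S" "independent B" "S \<subseteq> span B" "card B = dim S"
    using basis_exists by blast
  have "finite B"
    using independent_span_bound[OF assms(3) B(2)] B(1) assms(2) by auto
  with independent_span_bound[OF _ assms(4)] B(3,4) assms(5) show ?thesis
    by (metis order_trans)
qed

lemma subspace_eq_if_dim_le:
  assumes "subspace S" "subspace S'" "S \<subseteq> S'" "S' \<subseteq> span W" "finite W" "dim S' \<le> dim S"
  shows "S = S'"
proof (rule ccontr)
  assume "S \<noteq> S'"
  then obtain v where v: "v \<in> S'" "v \<notin> S"
    using assms(3) by auto
  obtain B where B: "B \<subseteq> S" "independent B" "S \<subseteq> span B" "card B = dim S"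
    using basis_exists by blast
  have "v \<notin> span B"
    using span_minimal[OF B(1) assms(1)] v(2) by auto
  then have "independent (insert v B)"
    using independent_insertI B(2) by blast
  moreover have "insert v B \<subseteq> S'"
    using B(1) assms(3) v(1) by blast
  ultimately have "finite (insert v B) \<and> card (insert v B) \<le> dim S'"
    by (rule independent_card_le_dim[OF assms(2,4,5)])
  moreover have "v \<notin> B"
    using \<open>v \<notin> span B\<close> span_base by blast
  ultimately show False
    using B(4) assms(6) by auto
qed

lemma subspace_chain_has_least:
  assumes "a \<in> A" "\<And>a. a \<in> A \<Longrightarrow> subspace (S a)" "\<And>a. a \<in> A \<Longrightarrow> S a \<subseteq> span W" "finite W"
    and chain: "\<And>a b. a \<in> A \<Longrightarrow> b \<in> A \<Longrightarrow> S a \<subseteq> S b \<or> S b \<subseteq> S a"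
  shows "\<exists>a0\<in>A. \<forall>a\<in>A. S a0 \<subseteq> S a"
proof -
  obtain a0 where a0: "a0 \<in> A" "\<And>a. a \<in> A \<Longrightarrow> dim (S a0) \<le> dim (S a)"
    using ex_has_least_nat[of "\<lambda>a. a \<in> A" a "\<lambda>a. dim (S a)"] assms(1) by blast
  have "S a0 \<subseteq> S a" if "a \<in> A" for a
    using chain[OF a0(1) that] subspace_eq_if_dim_le[OF assms(2)[OF that] assms(2)[OF a0(1)] _
        assms(3)[OF a0(1)] assms(4) a0(2)[OF that]]
    by blast
  with a0(1) show ?thesis by blast
qed

lemma subspace_chain_has_greatest:
  assumes "a \<in> A" "\<And>a. a \<in> A \<Longrightarrow> subspace (S a)" "\<And>a. a \<in> A \<Longrightarrow> S a \<subseteq> span W" "finite W"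
    and chain: "\<And>a b. a \<in> A \<Longrightarrow> b \<in> A \<Longrightarrow> S a \<subseteq> S b \<or> S b \<subseteq> S a"
  shows "\<exists>a0\<in>A. \<forall>a\<in>A. S a \<subseteq> S a0"
proof -
  obtain a0 where a0: "a0 \<in> A" "\<And>a. a \<in> A \<Longrightarrow> card W - dim (S a0) \<le> card W - dim (S a)"
    using ex_has_least_nat[of "\<lambda>a. a \<in> A" a "\<lambda>a. card W - dim (S a)"] assms(1) by blast
  have "dim (S a) \<le> dim (S a0)" if "a \<in> A" for a
    using a0 that dim_le_card[OF assms(3) assms(4)] by (metis diff_le_mono2 diff_diff_cancel)
  then have "S a \<subseteq> S a0" if "a \<in> A" for a
    using chain[OF a0(1) that] subspace_eq_if_dim_le[OF assms(2)[OF a0(1)] assms(2)[OF that] _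
        assms(3)[OF that] assms(4)] that
    by blast
  with a0(1) show ?thesis by blast
qed

end

lemma lin_on_add: "lin_on s1 s2 A f \<Longrightarrow> a \<in> A \<Longrightarrow> b \<in> A \<Longrightarrow> f (a + b) = f a + f b"
  and lin_on_scale: "lin_on s1 s2 A f \<Longrightarrow> a \<in> A \<Longrightarrow> f (s1 c a) = s2 c (f a)"
  unfolding lin_on_def by blast+

context vector_space
begin

lemma lin_on_zero:
  assumes "subspace A" "lin_on scale s A f"
  shows "f 0 = 0"
  using lin_on_add[OF assms(2), of 0 0] subspace_0[OF assms(1)] by simp

lemma lin_on_diff:
  assumes "subspace A" "lin_on scale s A f" "a \<in> A" "b \<in> A"
  shows "f (a - b) = f a - f b"
  using lin_on_add[OF assms(2) subspace_diff[OF assms(1,3,4)] assms(4)] by (simp add: eq_diff_eq)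

lemma lin_on_image_subspace:
  assumes "subspace A" "lin_on scale scale A f"
  shows "subspace (f ` A)"
proof (rule subspaceI)
  show "0 \<in> f ` A"
    using lin_on_zero[OF assms] subspace_0[OF assms(1)] by (metis image_eqI)
next
  fix u v assume "u \<in> f ` A" "v \<in> f ` A"
  then obtain a b where "a \<in> A" "b \<in> A" "u = f a" "v = f b" by blast
  then show "u + v \<in> f ` A"
    using lin_on_add[OF assms(2)] subspace_add[OF assms(1)] by (metis image_eqI)
next
  fix c u assume "u \<in> f ` A"
  then obtain a where "a \<in> A" "u = f a" by blast
  then show "c *s u \<in> f ` A"
    using lin_on_scale[OF assms(2)] subspace_scale[OF assms(1)] by (metis image_eqI)
qed

lemma subspace_UN_chain:
  assumes "P \<noteq> {}" "\<And>i. i \<in> P \<Longrightarrow> subspace (S i)"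
    and chain: "\<And>i j. i \<in> P \<Longrightarrow> j \<in> P \<Longrightarrow> S i \<subseteq> S j \<or> S j \<subseteq> S i"
  shows "subspace (\<Union>i\<in>P. S i)"
proof (rule subspaceI)
  show "0 \<in> (\<Union>i\<in>P. S i)"
    using assms(1,2) subspace_0 by blast
next
  fix a b assume "a \<in> (\<Union>i\<in>P. S i)" "b \<in> (\<Union>i\<in>P. S i)"
  then obtain i j where "i \<in> P" "j \<in> P" "a \<in> S i" "b \<in> S j"
    by blast
  then show "a + b \<in> (\<Union>i\<in>P. S i)"
    using chain[of i j] assms(2) subspace_add by blast
next
  fix c a assume "a \<in> (\<Union>i\<in>P. S i)"
  then show "c *s a \<in> (\<Union>i\<in>P. S i)"
    using assms(2) subspace_scale by blast
qed

lemma kernel_subspace: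
  assumes "subspace A" "lin_on scale (*) A f"
  shows "subspace {a \<in> A. f a = 0}"
proof (rule subspaceI)
  show "0 \<in> {a \<in> A. f a = 0}"
    using lin_on_zero[OF assms] subspace_0[OF assms(1)] by simp
next
  fix a b assume "a \<in> {a \<in> A. f a = 0}" "b \<in> {a \<in> A. f a = 0}"
  then show "a + b \<in> {a \<in> A. f a = 0}"
    using lin_on_add[OF assms(2)] subspace_add[OF assms(1)] by simp
next
  fix c a assume "a \<in> {a \<in> A. f a = 0}"
  then show "c *s a \<in> {a \<in> A. f a = 0}"
    using lin_on_scale[OF assms(2)] subspace_scale[OF assms(1)] by simp
qed

lemma exists_functional_separating:
  assumes "subspace N" "z \<notin> N"
  shows "\<exists>f. lin_on scale (*) UNIV f \<and> f z = 1 \<and> (\<forall>a\<in>N. f a = 0)"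
proof -
  interpret p: vector_space_pair scale "(*) :: 'a \<Rightarrow> 'a \<Rightarrow> 'a"
    by unfold_locales (auto simp: algebra_simps)
  obtain B where B: "B \<subseteq> N" "independent B" "N \<subseteq> span B"
    using maximal_independent_subset by blast
  have "z \<notin> span B"
    using span_minimal[OF B(1) assms(1)] assms(2) by auto
  then have "independent (insert z B)"
    using independent_insertI B(2) by blast
  from p.linear_independent_extend[OF this, of "\<lambda>v. if v = z then 1 else 0"]
  obtain f where f: "Vector_Spaces.linear scale (*) f" "\<forall>v\<in>insert z B. f v = (if v = z then 1 else 0)"
    by blast
  have lin: "lin_on scale (*) UNIV f"
    using f(1) unfolding Vector_Spaces.linear_iff lin_on_def by auto
  have "B \<subseteq> {a. f a = 0}"
    using f(2) \<open>z \<notin> span B\<close> span_base by fastforce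
  moreover have "subspace {a. f a = 0}"
    using kernel_subspace[OF subspace_UNIV lin] by simp
  ultimately have "span B \<subseteq> {a. f a = 0}"
    by (rule span_minimal)
  then show ?thesis
    using lin f(2) B(3) by auto
qed

text \<open>Normalise f to take the value 1 at some m1 and separate G m1 from N + G(ker f).\<close>
lemma exists_functional_factor:
  assumes A: "subspace A" and N: "subspace N" and G: "lin_on scale scale A G" and f: "lin_on scale (*) A f"
    and vanish: "\<And>m. m \<in> A \<Longrightarrow> G m \<in> N \<Longrightarrow> f m = 0"
  shows "\<exists>f'. lin_on scale (*) UNIV f' \<and> (\<forall>m\<in>A. f' (G m) = f m) \<and> (\<forall>n\<in>N. f' n = 0)"
proof (cases "\<forall>m\<in>A. f m = 0")
  case True
  then show ?thesis
    by (intro exI[of _ "\<lambda>_. 0"]) (simp add: lin_on_def)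
next
  case False
  then obtain m0 where m0: "m0 \<in> A" "f m0 \<noteq> 0" by blast
  define m1 where "m1 = inverse (f m0) *s m0"
  have m1: "m1 \<in> A" "f m1 = 1"
    unfolding m1_def using subspace_scale[OF A m0(1)] lin_on_scale[OF f m0(1)] m0(2) by auto
  define K where "K = {m \<in> A. f m = 0}"
  define N' where "N' = {n + g | n g. n \<in> N \<and> g \<in> G ` K}"
  have K: "subspace K" "K \<subseteq> A"
    unfolding K_def using kernel_subspace[OF A f] by auto
  have GK: "lin_on scale scale K G"
    using G K(2) unfolding lin_on_def by blast
  have N': "subspace N'"
    unfolding N'_def by (rule subspace_sums[OF N lin_on_image_subspace[OF K(1) GK]])
  have "G m1 \<notin> N'"
  proof
    assume "G m1 \<in> N'"
    then obtain n k where nk: "n \<in> N" "k \<in> K" "G m1 = n + G k"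
      unfolding N'_def by blast
    then have "G (m1 - k) \<in> N"
      using lin_on_diff[OF A G m1(1), of k] K(2) by auto
    then have "f (m1 - k) = 0"
      using vanish subspace_diff[OF A m1(1)] K(2) nk(2) by blast
    then show False
      using lin_on_diff[OF A f m1(1)] K(2) nk(2) m1(2) unfolding K_def by auto
  qed
  then obtain f' where f': "lin_on scale (*) UNIV f'" "f' (G m1) = 1" "\<forall>a\<in>N'. f' a = 0"
    using exists_functional_separating[OF N'] by blast
  have "f' n = 0" if "n \<in> N" for n
    using f'(3) that lin_on_zero[OF K(1) GK] subspace_0[OF K(1)] unfolding N'_def by force
  moreover have "f' (G m) = f m" if m: "m \<in> A" for m
  proof -
    define k where "k = m - f m *s m1"
    have k: "k \<in> K"
      unfolding k_def K_def using lin_on_diff[OF A f m subspace_scale[OF A m1(1)]]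
        lin_on_scale[OF f m1(1)] m1(2) subspace_diff[OF A m subspace_scale[OF A m1(1)]] by simp
    have "G m = f m *s G m1 + G k"
      unfolding k_def using lin_on_diff[OF A G m subspace_scale[OF A m1(1)]] lin_on_scale[OF G m1(1)] by simp
    moreover have "f' (G k) = 0"
      using f'(3) k subspace_0[OF N] unfolding N'_def by force
    ultimately show ?thesis
      using f'(1,2) unfolding lin_on_def by simp
  qed
  ultimately show ?thesis
    using f'(1) by blast
qed

lemma line_kernel_decomposition:
  assumes S: "subspace S" and f: "lin_on scale (*) S f" and v: "v \<in> S" "f v = 1"
  shows "span {v} \<inter> {m \<in> S. f m = 0} = {0}"
    and "{u + w | u w. u \<in> span {v} \<and> w \<in> {m \<in> S. f m = 0}} = S"
proof -
  have fc: "f (c *s v) = c" for c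
    using lin_on_scale[OF f v(1)] v(2) by simp
  show "span {v} \<inter> {m \<in> S. f m = 0} = {0}"
    using fc subspace_0[OF S] lin_on_zero[OF S f] span_zero unfolding span_singleton by auto
  show "{u + w | u w. u \<in> span {v} \<and> w \<in> {m \<in> S. f m = 0}} = S"
  proof (intro equalityI subsetI)
    fix a assume "a \<in> {u + w | u w. u \<in> span {v} \<and> w \<in> {m \<in> S. f m = 0}}"
    then show "a \<in> S"
      using subspace_add[OF S] subspace_scale[OF S v(1)] unfolding span_singleton by auto
  next
    fix m assume m: "m \<in> S"
    have "f (m - f m *s v) = 0"
      using lin_on_diff[OF S f m subspace_scale[OF S v(1)]] fc by simp
    moreover have "m = f m *s v + (m - f m *s v)" by simp
    ultimately show "m \<in> {u + w | u w. u \<in> span {v} \<and> w \<in> {m \<in> S. f m = 0}}"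
      using m subspace_diff[OF S m subspace_scale[OF S v(1)]] unfolding span_singleton by blast
  qed
qed

end

section \<open>Inverse systems and sequences\<close>

text \<open>Mittag-Leffler: the thread is built inside the stable images, which surject onto each other.\<close>
lemma inverse_system_Suc_thread:
  fixes X :: "nat \<Rightarrow> 'a set" and h :: "nat \<Rightarrow> nat \<Rightarrow> 'a \<Rightarrow> 'a"
  assumes maps: "\<And>n k x. n \<le> k \<Longrightarrow> x \<in> X k \<Longrightarrow> h n k x \<in> X n"
    and comp: "\<And>n k l x. n \<le> k \<Longrightarrow> k \<le> l \<Longrightarrow> x \<in> X l \<Longrightarrow> h n k (h k l x) = h n l x"
    and nonempty: "\<And>n. X n \<noteq> {}"
    and stable: "\<And>n. \<exists>k0\<ge>n. \<forall>k\<ge>k0. h n k ` X k = h n k0 ` X k0"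
  shows "\<exists>sel. \<forall>n. sel n \<in> X n \<and> h n (Suc n) (sel (Suc n)) = sel n"
proof -
  have "\<forall>n. \<exists>k0. k0 \<ge> n \<and> (\<forall>k\<ge>k0. h n k ` X k = h n k0 ` X k0)"
    using stable by blast
  from choice[OF this] obtain K where "\<forall>n. K n \<ge> n \<and> (\<forall>k\<ge>K n. h n k ` X k = h n (K n) ` X (K n))"
    by blast
  then have K: "\<And>n. K n \<ge> n" "\<And>n k. k \<ge> K n \<Longrightarrow> h n k ` X k = h n (K n) ` X (K n)"
    by blast+
  define Y where "Y n = h n (K n) ` X (K n)" for n
  have Y: "Y n \<subseteq> X n" "Y n \<noteq> {}" for n
    unfolding Y_def using maps K(1) nonempty by blast+
  have lift: "\<exists>y'. y' \<in> Y (Suc n) \<and> h n (Suc n) y' = y" if "y \<in> Y n" for n y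
  proof -
    define L where "L = max (K n) (K (Suc n))"
    have L: "L \<ge> K n" "L \<ge> K (Suc n)" "Suc n \<le> L"
      using K(1)[of "Suc n"] unfolding L_def by auto
    have "y \<in> h n L ` X L"
      using that K(2)[OF L(1)] unfolding Y_def by simp
    then obtain x where x: "x \<in> X L" "y = h n L x"
      by blast
    have "h (Suc n) L x \<in> Y (Suc n)"
      using K(2)[OF L(2)] x(1) unfolding Y_def by blast
    moreover have "h n (Suc n) (h (Suc n) L x) = y"
      using comp[of n "Suc n" L x] L x by simp
    ultimately show ?thesis by blast
  qed
  have "\<exists>y. y \<in> Y 0"
    using Y(2) by blast
  from dependent_nat_choice[of "\<lambda>n y. y \<in> Y n" "\<lambda>n y y'. h n (Suc n) y' = y", OF this lift]
  show ?thesis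
    using Y(1) by blast
qed

lemma inverse_system_thread:
  fixes X :: "nat \<Rightarrow> 'a set" and h :: "nat \<Rightarrow> nat \<Rightarrow> 'a \<Rightarrow> 'a"
  assumes maps: "\<And>n k x. n \<le> k \<Longrightarrow> x \<in> X k \<Longrightarrow> h n k x \<in> X n"
    and comp: "\<And>n k l x. n \<le> k \<Longrightarrow> k \<le> l \<Longrightarrow> x \<in> X l \<Longrightarrow> h n k (h k l x) = h n l x"
    and ident: "\<And>n x. x \<in> X n \<Longrightarrow> h n n x = x"
    and nonempty: "\<And>n. X n \<noteq> {}"
    and stable: "\<And>n. \<exists>k0\<ge>n. \<forall>k\<ge>k0. h n k ` X k = h n k0 ` X k0"
  shows "\<exists>sel. \<forall>n. sel n \<in> X n \<and> (\<forall>k\<ge>n. h n k (sel k) = sel n)"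
proof -
  obtain sel where sel: "\<And>n. sel n \<in> X n" "\<And>n. h n (Suc n) (sel (Suc n)) = sel n"
    using inverse_system_Suc_thread[OF maps comp nonempty stable] by blast
  have "h n k (sel k) = sel n" if "n \<le> k" for n k
    using that
  proof (induction k rule: dec_induct)
    case base
    then show ?case
      using ident sel(1) by blast
  next
    case (step k)
    have "h n (Suc k) (sel (Suc k)) = h n k (h k (Suc k) (sel (Suc k)))"
      using comp[of n k "Suc k" "sel (Suc k)"] step(1) sel(1) by simp
    then show ?case
      using sel(2) step(3) by simp
  qed
  then show ?thesis
    using sel(1) by blast
qed

lemma decseq_approaching_from_above:
  fixes \<alpha> e :: real
  assumes "\<alpha> < e"
  shows "\<exists>a. decseq a \<and> (\<forall>n. \<alpha> < a n \<and> a n \<le> e) \<and> (\<forall>p>\<alpha>. \<exists>n. a n \<le> p)"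
proof -
  define a where "a n = \<alpha> + (e - \<alpha>) / real (Suc n)" for n
  have "decseq a"
    unfolding a_def using assms by (intro decseq_SucI) (simp add: divide_left_mono)
  moreover have "\<alpha> < a n \<and> a n \<le> e" for n
  proof
    show "\<alpha> < a n"
      unfolding a_def using assms by simp
    have "(e - \<alpha>) / real (Suc n) \<le> e - \<alpha>"
      using assms by (simp add: divide_le_eq)
    then show "a n \<le> e"
      unfolding a_def by simp
  qed
  moreover have "\<exists>n. a n \<le> p" if p: "\<alpha> < p" for p
  proof -
    obtain n where "inverse (real (Suc n)) < (p - \<alpha>) / (e - \<alpha>)"
      using reals_Archimedean p assms by (metis diff_gt_0_iff_gt divide_pos_pos)
    then have "(e - \<alpha>) / real (Suc n) < p - \<alpha>"
      using assms by (simp add: field_simps)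
    then show ?thesis
      unfolding a_def by (intro exI[of _ n]) simp
  qed
  ultimately show ?thesis by blast
qed

lemma upclosed_decseq_coinitial:
  assumes up: "upclosed J" and e: "e \<in> J" and lb: "\<And>p. p \<in> J \<Longrightarrow> c < p"
  shows "\<exists>a. decseq a \<and> (\<forall>n. a n \<in> J \<and> a n \<le> e) \<and> (\<forall>p\<in>J. \<exists>n. a n \<le> p)"
proof -
  define \<alpha> where "\<alpha> = Inf J"
  have bdd: "bdd_below J"
    using lb by (intro bdd_belowI[of _ c]) (simp add: less_imp_le)
  have \<alpha>_le: "\<alpha> \<le> p" if "p \<in> J" for p
    unfolding \<alpha>_def using cInf_lower[OF that bdd] .
  have above_\<alpha>: "p \<in> J" if "\<alpha> < p" for p
  proof -
    have "J \<noteq> {}" "Inf J < p"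
      using e that unfolding \<alpha>_def by auto
    then obtain q where "q \<in> J" "q < p"
      using cInf_less_iff[OF _ bdd] by blast
    then show ?thesis
      using up unfolding upclosed_def by auto
  qed
  show ?thesis
  proof (cases "\<alpha> \<in> J")
    case True
    then show ?thesis
      by (intro exI[of _ "\<lambda>n. \<alpha>"]) (use \<alpha>_le e in \<open>auto simp: decseq_def\<close>)
  next
    case False
    have \<alpha>_less: "\<alpha> < p" if "p \<in> J" for p
      using \<alpha>_le[OF that] False that by (cases "\<alpha> = p") auto
    obtain a where "decseq a" "\<And>n. \<alpha> < a n \<and> a n \<le> e" "\<And>p. \<alpha> < p \<Longrightarrow> \<exists>n. a n \<le> p"
      using decseq_approaching_from_above[OF \<alpha>_less[OF e]] by blast
    then show ?thesis
      using above_\<alpha> \<alpha>_less by blast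
  qed
qed

section \<open>Persistence modules\<close>

locale persistence_module =
  fixes sc :: "'k::field \<Rightarrow> 'v::ab_group_add \<Rightarrow> 'v"
    and T :: "'a::order set" and V :: "'a \<Rightarrow> 'v set" and F :: "'a \<Rightarrow> 'a \<Rightarrow> 'v \<Rightarrow> 'v"
  assumes pmod: "pmod sc T V F"
begin

sublocale vs: vector_space sc
  using pmod unfolding pmod_def by blast

lemma subspace_V: "t \<in> T \<Longrightarrow> vs.subspace (V t)"
  using pmod unfolding pmod_def by simp

lemma map_lin: "s \<in> T \<Longrightarrow> t \<in> T \<Longrightarrow> s \<le> t \<Longrightarrow> lin_on sc sc (V s) (F s t)"
  using pmod unfolding pmod_def by blast

lemma map_in: "s \<in> T \<Longrightarrow> t \<in> T \<Longrightarrow> s \<le> t \<Longrightarrow> m \<in> V s \<Longrightarrow> F s t m \<in> V t"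
  using pmod unfolding pmod_def by blast

lemma map_id: "t \<in> T \<Longrightarrow> m \<in> V t \<Longrightarrow> F t t m = m"
  using pmod unfolding pmod_def by blast

lemma map_comp: "r \<in> T \<Longrightarrow> s \<in> T \<Longrightarrow> t \<in> T \<Longrightarrow> r \<le> s \<Longrightarrow> s \<le> t \<Longrightarrow> m \<in> V r \<Longrightarrow>
    F s t (F r s m) = F r t m"
  using pmod unfolding pmod_def by blast

lemma map_add: "s \<in> T \<Longrightarrow> t \<in> T \<Longrightarrow> s \<le> t \<Longrightarrow> m \<in> V s \<Longrightarrow> n \<in> V s \<Longrightarrow>
    F s t (m + n) = F s t m + F s t n"
  and map_scale: "s \<in> T \<Longrightarrow> t \<in> T \<Longrightarrow> s \<le> t \<Longrightarrow> m \<in> V s \<Longrightarrow> F s t (sc c m) = sc c (F s t m)"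
  using lin_on_add[OF map_lin] lin_on_scale[OF map_lin] by blast+

lemma map_zero: "s \<in> T \<Longrightarrow> t \<in> T \<Longrightarrow> s \<le> t \<Longrightarrow> F s t 0 = 0"
  using vs.lin_on_zero[OF subspace_V map_lin] by blast

lemma map_diff: "s \<in> T \<Longrightarrow> t \<in> T \<Longrightarrow> s \<le> t \<Longrightarrow> m \<in> V s \<Longrightarrow> n \<in> V s \<Longrightarrow>
    F s t (m - n) = F s t m - F s t n"
  using vs.lin_on_diff[OF subspace_V map_lin] by blast

lemma map_neg: "s \<in> T \<Longrightarrow> t \<in> T \<Longrightarrow> s \<le> t \<Longrightarrow> m \<in> V s \<Longrightarrow> F s t (- m) = - F s t m"
  using map_diff[of s t 0 m] map_zero[of s t] vs.subspace_0[OF subspace_V, of s] by simp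

lemma image_subspace: "s \<in> T \<Longrightarrow> t \<in> T \<Longrightarrow> s \<le> t \<Longrightarrow> vs.subspace (F s t ` V s)"
  using vs.lin_on_image_subspace[OF subspace_V map_lin] by blast

lemma image_mono:
  assumes "r \<in> T" "s \<in> T" "t \<in> T" "r \<le> s" "s \<le> t"
  shows "F r t ` V r \<subseteq> F s t ` V s"
  using map_comp[OF assms] map_in[OF assms(1,2,4)] by (metis image_mono image_subsetI image_eqI)

text \<open>M splits as the span of v plus the kernel of phi, so indecomposability kills the kernel.\<close>
lemma natural_functional_kernel_trivial:
  assumes ind: "indecomposable sc T V F"
    and B: "B \<subseteq> T" "\<And>s t. s \<in> B \<Longrightarrow> t \<in> T \<Longrightarrow> s \<le> t \<Longrightarrow> t \<in> B" "b \<in> B"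
    and phi_lin: "\<And>t. t \<in> T \<Longrightarrow> lin_on sc (*) (V t) (phi t)"
    and phi_nat: "\<And>s t m. s \<in> T \<Longrightarrow> t \<in> T \<Longrightarrow> s \<le> t \<Longrightarrow> m \<in> V s \<Longrightarrow> phi t (F s t m) = phi s m"
    and phi_out: "\<And>s m. s \<in> T \<Longrightarrow> s \<notin> B \<Longrightarrow> m \<in> V s \<Longrightarrow> phi s m = 0"
    and v: "\<And>t. t \<in> B \<Longrightarrow> v t \<in> V t" "\<And>t. t \<in> B \<Longrightarrow> phi t (v t) = 1"
      "\<And>s t. s \<in> B \<Longrightarrow> t \<in> T \<Longrightarrow> s \<le> t \<Longrightarrow> F s t (v s) = v t"
  shows "\<forall>t\<in>T. {m \<in> V t. phi t m = 0} = {0}"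
proof -
  define U where "U t = (if t \<in> B then vs.span {v t} else {0})" for t
  define W where "W t = {m \<in> V t. phi t m = 0}" for t
  have W_out: "W t = V t" if "t \<in> T" "t \<notin> B" for t
    unfolding W_def using phi_out that by auto
  have split: "vs.subspace (U t) \<and> vs.subspace (W t) \<and> U t \<inter> W t = {0} \<and>
      {u + w | u w. u \<in> U t \<and> w \<in> W t} = V t" if t: "t \<in> T" for t
  proof (cases "t \<in> B")
    case True
    then show ?thesis
      unfolding U_def W_def
      using vs.line_kernel_decomposition[OF subspace_V[OF t] phi_lin[OF t] v(1,2)[OF True]]
        vs.subspace_span vs.kernel_subspace[OF subspace_V[OF t] phi_lin[OF t]]
      by simp
  next
    case False
    then show ?thesis
      unfolding U_def W_out[OF t False]
      using subspace_V[OF t] vs.subspace_0[OF subspace_V[OF t]] vs.subspace_single_0 by auto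
  qed
  have U_map: "F s t u \<in> U t" if st: "s \<in> T" "t \<in> T" "s \<le> t" and u: "u \<in> U s" for s t u
  proof (cases "s \<in> B")
    case True
    then obtain c where "u = sc c (v s)"
      using u unfolding U_def vs.span_singleton by auto
    then have "F s t u = sc c (v t)"
      using map_scale[OF st v(1)[OF True]] v(3)[OF True st(2,3)] by simp
    then show ?thesis
      using B(2)[OF True st(2,3)] unfolding U_def vs.span_singleton by auto
  next
    case False
    then show ?thesis
      using u map_zero[OF st] vs.span_zero unfolding U_def by auto
  qed
  have W_map: "F s t w \<in> W t" if st: "s \<in> T" "t \<in> T" "s \<le> t" and w: "w \<in> W s" for s t w
    using w map_in[OF st] phi_nat[OF st] unfolding W_def by auto
  have "v b \<in> U b" "v b \<noteq> 0"
    using v(2)[OF B(3)] vs.lin_on_zero[OF subspace_V phi_lin, of b] B(1,3)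
    unfolding U_def by (auto intro: vs.span_base)
  then have "\<not> (\<forall>t\<in>T. U t = {0})"
    using B(1,3) by blast
  moreover have "(\<forall>t\<in>T. vs.subspace (U t) \<and> vs.subspace (W t) \<and> U t \<inter> W t = {0} \<and>
        {u + w | u w. u \<in> U t \<and> w \<in> W t} = V t) \<and>
      (\<forall>s\<in>T. \<forall>t\<in>T. s \<le> t \<longrightarrow> (\<forall>x\<in>U s. F s t x \<in> U t) \<and> (\<forall>x\<in>W s. F s t x \<in> W t))"
    using split U_map W_map by (intro conjI ballI impI) blast+
  note ind[unfolded indecomposable_def, THEN conjunct2, rule_format, OF this]
  ultimately show ?thesis
    unfolding W_def by blast
qed

lemma pmod_iso_kB_of_natural_functional:
  assumes phi_lin: "\<And>t. t \<in> T \<Longrightarrow> lin_on sc (*) (V t) (phi t)"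
    and phi_nat: "\<And>s t m. s \<in> T \<Longrightarrow> t \<in> T \<Longrightarrow> s \<le> t \<Longrightarrow> m \<in> V s \<Longrightarrow> phi t (F s t m) = phi s m"
    and phi_out: "\<And>s m. s \<in> T \<Longrightarrow> s \<notin> B \<Longrightarrow> m \<in> V s \<Longrightarrow> phi s m = 0"
    and kernel: "\<And>t. t \<in> T \<Longrightarrow> {m \<in> V t. phi t m = 0} = {0}"
    and B_up: "\<And>s t. s \<in> B \<Longrightarrow> t \<in> T \<Longrightarrow> s \<le> t \<Longrightarrow> t \<in> B"
    and v: "\<And>t. t \<in> B \<Longrightarrow> t \<in> T \<Longrightarrow> v t \<in> V t \<and> phi t (v t) = 1"
  shows "pmod_iso sc T V F (*) (kB_space B) (kB_map B)"
  unfolding pmod_iso_def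
proof (intro exI[of _ phi] conjI ballI impI)
  fix t assume t: "t \<in> T"
  show "lin_on sc (*) (V t) (phi t)"
    by (rule phi_lin[OF t])
  have inj: "inj_on (phi t) (V t)"
  proof (rule inj_onI)
    fix a b assume ab: "a \<in> V t" "b \<in> V t" "phi t a = phi t b"
    then have "a - b \<in> {m \<in> V t. phi t m = 0}"
      using vs.lin_on_diff[OF subspace_V[OF t] phi_lin[OF t] ab(1,2)] vs.subspace_diff[OF subspace_V[OF t] ab(1,2)]
      by simp
    then show "a = b"
      using kernel[OF t] by simp
  qed
  show "bij_betw (phi t) (V t) (kB_space B t)"
  proof (cases "t \<in> B")
    case True
    have "c \<in> phi t ` V t" for c
      using v[OF True t] lin_on_scale[OF phi_lin[OF t], of "v t" c] vs.subspace_scale[OF subspace_V[OF t]]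
      by (metis image_eqI mult.right_neutral)
    then show ?thesis
      using inj True unfolding kB_space_def bij_betw_def by auto
  next
    case False
    then have "V t = {0}"
      using kernel[OF t] phi_out[OF t False] by auto
    then show ?thesis
      using False phi_out[OF t False] unfolding kB_space_def bij_betw_def by auto
  qed
next
  fix s t a assume st: "s \<in> T" "t \<in> T" "s \<le> t" and a: "a \<in> V s"
  show "phi t (F s t a) = kB_map B s t (phi s a)"
    using phi_nat[OF st a] phi_out[OF st(1) _ a] B_up[OF _ st(2,3)] unfolding kB_map_def by auto
qed

end

section \<open>The quadrant above a nonsurjective square\<close>

locale nonsurjective_square = persistence_module sc T V F
  for sc :: "'k::field \<Rightarrow> 'v::ab_group_add \<Rightarrow> 'v" and T :: "(real \<times> real) set" and V F +
  fixes x x' y y' :: real and z :: 'v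
  assumes pfd: "pfd sc T V" and exact: "middle_exact T V F"
    and quadrant: "\<And>p q. x \<le> p \<Longrightarrow> y \<le> q \<Longrightarrow> (p, q) \<in> T"
    and square: "x \<le> x'" "y \<le> y'"
    and zV: "z \<in> V (x', y')"
    and z_not_in_image: "\<not> (\<exists>u\<in>V (x, y'). \<exists>w\<in>V (x', y). z = F (x, y') (x', y') u - F (x', y) (x', y') w)"
begin

lemma finite_span_V: "t \<in> T \<Longrightarrow> \<exists>W. finite W \<and> W \<subseteq> V t \<and> vs.span W = V t"
  using pfd unfolding pfd_def by blast

lemma middle_exact_lift:
  assumes "p \<le> p'" "q \<le> q'" "(p, q) \<in> T" "(p, q') \<in> T" "(p', q) \<in> T" "(p', q') \<in> T"
    and "u \<in> V (p, q')" "w \<in> V (p', q)" "F (p, q') (p', q') u = F (p', q) (p', q') w"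
  shows "\<exists>e\<in>V (p, q). F (p, q) (p, q') e = u \<and> F (p, q) (p', q) e = w"
proof -
  have "(\<lambda>v. (F (p, q) (p, q') v, F (p, q) (p', q) v)) ` V (p, q) =
          {(u, w). u \<in> V (p, q') \<and> w \<in> V (p', q) \<and> F (p, q') (p', q') u - F (p', q) (p', q') w = 0}"
    using exact assms(1-6) unfolding middle_exact_def Let_def by blast
  moreover have "(u, w) \<in> {(u, w). u \<in> V (p, q') \<and> w \<in> V (p', q) \<and> F (p, q') (p', q') u - F (p', q) (p', q') w = 0}"
    using assms(7-9) by simp
  ultimately have "(u, w) \<in> (\<lambda>v. (F (p, q) (p, q') v, F (p, q) (p', q) v)) ` V (p, q)" by simp
  then obtain e where "e \<in> V (p, q)" "(u, w) = (F (p, q) (p, q') e, F (p, q) (p', q) e)" by blast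
  thus ?thesis by auto
qed

lemma corner_in_T: "(x', y') \<in> T"
  using quadrant square by auto

text \<open>The image in M(p, q) of the left edge {x} \<times> [y, q] and the bottom edge [x, p] \<times> {y}.\<close>
definition edge_img :: "real \<Rightarrow> real \<Rightarrow> 'v set" where
  "edge_img p q = {a + b | a b. a \<in> F (x, q) (p, q) ` V (x, q) \<and> b \<in> F (p, y) (p, q) ` V (p, y)}"

lemma edge_img_sub:
  assumes "x \<le> p" "y \<le> q"
  shows "vs.subspace (edge_img p q)" "edge_img p q \<subseteq> V (p, q)"
proof -
  have T: "(x, q) \<in> T" "(p, y) \<in> T" "(p, q) \<in> T" and le: "(x, q) \<le> (p, q)" "(p, y) \<le> (p, q)"
    using quadrant assms square by auto
  show "vs.subspace (edge_img p q)"
    unfolding edge_img_def using vs.subspace_sums[OF image_subspace image_subspace] T le by blast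
  show "edge_img p q \<subseteq> V (p, q)"
    unfolding edge_img_def
    using map_in[OF T(1,3) le(1)] map_in[OF T(2,3) le(2)] vs.subspace_add[OF subspace_V[OF T(3)]]
    by blast
qed

lemma edge_img_left:
  assumes "x \<le> p" "y \<le> q0" "q0 \<le> q" "u \<in> V (x, q0)"
  shows "F (x, q0) (p, q) u \<in> edge_img p q"
proof -
  have h: "(x, q0) \<in> T" "(x, q) \<in> T" "(p, y) \<in> T" "(p, q) \<in> T"
    using quadrant assms square by auto
  have le: "(x, q0) \<le> (x, q)" "(x, q) \<le> (p, q)" "(p, y) \<le> (p, q)" using assms by auto
  have "F (x, q0) (p, q) u = F (x, q) (p, q) (F (x, q0) (x, q) u) + F (p, y) (p, q) 0"
    using map_comp[OF h(1,2,4) le(1,2) assms(4)] map_zero[OF h(3,4) le(3)] by simp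
  thus ?thesis
    unfolding edge_img_def
    using map_in[OF h(1,2) le(1) assms(4)] vs.subspace_0[OF subspace_V[OF h(3)]] by blast
qed

lemma edge_img_bottom:
  assumes "y \<le> q" "x \<le> p0" "p0 \<le> p" "w \<in> V (p0, y)"
  shows "F (p0, y) (p, q) w \<in> edge_img p q"
proof -
  have h: "(p0, y) \<in> T" "(p, y) \<in> T" "(x, q) \<in> T" "(p, q) \<in> T"
    using quadrant assms square by auto
  have le: "(p0, y) \<le> (p, y)" "(p, y) \<le> (p, q)" "(x, q) \<le> (p, q)" using assms by auto
  have "F (p0, y) (p, q) w = F (x, q) (p, q) 0 + F (p, y) (p, q) (F (p0, y) (p, y) w)"
    using map_comp[OF h(1,2,4) le(1,2) assms(4)] map_zero[OF h(3,4) le(3)] by simp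
  thus ?thesis
    unfolding edge_img_def
    using map_in[OF h(1,2) le(1) assms(4)] vs.subspace_0[OF subspace_V[OF h(3)]] by blast
qed

lemma edge_img_reflect_h:
  assumes "x \<le> p" "p \<le> p'" "y \<le> q" "m \<in> V (p, q)" "F (p, q) (p', q) m \<in> edge_img p' q"
  shows "m \<in> edge_img p q"
proof -
  have h: "(x, q) \<in> T" "(p, y) \<in> T" "(p, q) \<in> T" "(p', q) \<in> T" "(p', y) \<in> T"
    using quadrant assms square by auto
  have le: "(x, q) \<le> (p, q)" "(p, q) \<le> (p', q)" "(x, q) \<le> (p', q)" "(p', y) \<le> (p', q)"
    using assms by auto
  obtain u w where uw: "u \<in> V (x, q)" "w \<in> V (p', y)" "F (p, q) (p', q) m = F (x, q) (p', q) u + F (p', y) (p', q) w"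
    using assms(5) unfolding edge_img_def by blast
  define m' where "m' = m - F (x, q) (p, q) u"
  have m'V: "m' \<in> V (p, q)"
    unfolding m'_def
    using vs.subspace_diff[OF subspace_V[OF h(3)] assms(4) map_in[OF h(1,3) le(1) uw(1)]] .
  have "F (p, q) (p', q) m' = F (p', y) (p', q) w"
    unfolding m'_def map_diff[OF h(3,4) le(2) assms(4) map_in[OF h(1,3) le(1) uw(1)]] map_comp[OF h(1,3,4) le(1,2) uw(1)] uw(3)
    by simp
  from middle_exact_lift[of p p' y q, OF assms(2) assms(3) h(2) h(3) h(5) h(4) m'V uw(2) this]
  obtain e where e: "e \<in> V (p, y)" "F (p, y) (p, q) e = m'" by blast
  have "m = F (x, q) (p, q) u + F (p, y) (p, q) e" using e(2) unfolding m'_def by simp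
  thus ?thesis unfolding edge_img_def using uw(1) e(1) by blast
qed

lemma edge_img_reflect_v:
  assumes "x \<le> p" "y \<le> q" "q \<le> q'" "m \<in> V (p, q)" "F (p, q) (p, q') m \<in> edge_img p q'"
  shows "m \<in> edge_img p q"
proof -
  have h: "(x, q) \<in> T" "(p, y) \<in> T" "(p, q) \<in> T" "(p, q') \<in> T" "(x, q') \<in> T"
    using quadrant assms square by auto
  have le: "(p, y) \<le> (p, q)" "(p, q) \<le> (p, q')" "(x, q') \<le> (p, q')" using assms by auto
  obtain u w where uw: "u \<in> V (x, q')" "w \<in> V (p, y)" "F (p, q) (p, q') m = F (x, q') (p, q') u + F (p, y) (p, q') w"
    using assms(5) unfolding edge_img_def by blast
  define m' where "m' = m - F (p, y) (p, q) w"
  have m'V: "m' \<in> V (p, q)"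
    unfolding m'_def
    using vs.subspace_diff[OF subspace_V[OF h(3)] assms(4) map_in[OF h(2,3) le(1) uw(2)]] .
  have "F (x, q') (p, q') u = F (p, q) (p, q') m'"
    unfolding m'_def map_diff[OF h(3,4) le(2) assms(4) map_in[OF h(2,3) le(1) uw(2)]] map_comp[OF h(2,3,4) le(1,2) uw(2)] uw(3)
    by simp
  from middle_exact_lift[of x p q q', OF assms(1) assms(3) h(1) h(5) h(3) h(4) uw(1) m'V this]
  obtain e where e: "e \<in> V (x, q)" "F (x, q) (p, q) e = m'" by blast
  have "m = F (x, q) (p, q) e + F (p, y) (p, q) w" using e(2) unfolding m'_def by simp
  thus ?thesis unfolding edge_img_def using uw(2) e(1) by blast
qed

lemma edge_img_reflect:
  assumes "x \<le> p" "p \<le> p'" "y \<le> q" "q \<le> q'" "m \<in> V (p, q)" "F (p, q) (p', q') m \<in> edge_img p' q'"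
  shows "m \<in> edge_img p q"
proof -
  have h: "(p, q) \<in> T" "(p', q) \<in> T" "(p', q') \<in> T" using quadrant assms square by auto
  have le: "(p, q) \<le> (p', q)" "(p', q) \<le> (p', q')" using assms by auto
  have "F (p', q) (p', q') (F (p, q) (p', q) m) \<in> edge_img p' q'"
    using map_comp[OF h le assms(5)] assms(6) by simp
  hence "F (p, q) (p', q) m \<in> edge_img p' q"
    using edge_img_reflect_v[of p' q q'] assms map_in[OF h(1,2) le(1) assms(5)] by simp
  thus ?thesis using edge_img_reflect_h[of p p' q m] assms by simp
qed

lemma edge_img_square:
  assumes "x \<le> p" "p \<le> p'" "y \<le> q" "q \<le> q'" "p' \<le> r1" "q' \<le> r2"
    and "m1 \<in> V (p, q')" "m2 \<in> V (p', q)" "F (p, q') (r1, r2) m1 - F (p', q) (r1, r2) m2 \<in> edge_img r1 r2"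
  shows "\<exists>e\<in>V (p, q). F (p, q) (r1, r2) e - F (p, q') (r1, r2) m1 \<in> edge_img r1 r2"
proof -
  have h: "(p, q) \<in> T" "(p, q') \<in> T" "(p', q) \<in> T" "(p', q') \<in> T" "(r1, r2) \<in> T"
    "(x, q') \<in> T" "(p', y) \<in> T" using quadrant assms square by auto
  have le: "(p, q') \<le> (p', q')" "(p', q) \<le> (p', q')" "(p', q') \<le> (r1, r2)" "(x, q') \<le> (p, q')"
    "(p', y) \<le> (p', q)" "(p, q) \<le> (p, q')" "(p, q') \<le> (r1, r2)" "(x, q') \<le> (p', q')" "(p', y) \<le> (p', q')"
    "(x, q') \<le> (r1, r2)"
    using assms by auto
  define n where "n = F (p, q') (p', q') m1 - F (p', q) (p', q') m2"
  have Fm1: "F (p, q') (p', q') m1 \<in> V (p', q')" using map_in[OF h(2,4) le(1) assms(7)] .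
  have Fm2: "F (p', q) (p', q') m2 \<in> V (p', q')" using map_in[OF h(3,4) le(2) assms(8)] .
  have nV: "n \<in> V (p', q')" unfolding n_def using vs.subspace_diff[OF subspace_V[OF h(4)] Fm1 Fm2] .
  have "F (p', q') (r1, r2) n = F (p, q') (r1, r2) m1 - F (p', q) (r1, r2) m2"
    unfolding n_def map_diff[OF h(4,5) le(3) Fm1 Fm2] map_comp[OF h(2,4,5) le(1,3) assms(7)] map_comp[OF h(3,4,5) le(2,3) assms(8)] ..
  hence "n \<in> edge_img p' q'" using edge_img_reflect[of p' r1 q' r2 n] assms nV by simp
  then obtain u w where uw: "u \<in> V (x, q')" "w \<in> V (p', y)" "n = F (x, q') (p', q') u + F (p', y) (p', q') w"
    unfolding edge_img_def by blast
  define u' where "u' = F (x, q') (p, q') u"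
  define w' where "w' = F (p', y) (p', q) w"
  have u'V: "u' \<in> V (p, q')" unfolding u'_def using map_in[OF h(6,2) le(4) uw(1)] .
  have w'V: "w' \<in> V (p', q)" unfolding w'_def using map_in[OF h(7,3) le(5) uw(2)] .
  have Fu': "F (p, q') (p', q') u' = F (x, q') (p', q') u"
    unfolding u'_def using map_comp[OF h(6,2,4) le(4,1) uw(1)] .
  have Fw': "F (p', q) (p', q') w' = F (p', y) (p', q') w"
    unfolding w'_def using map_comp[OF h(7,3,4) le(5,2) uw(2)] .
  have m1u: "m1 - u' \<in> V (p, q')" using vs.subspace_diff[OF subspace_V[OF h(2)] assms(7) u'V] .
  have m2w: "m2 + w' \<in> V (p', q)" using vs.subspace_add[OF subspace_V[OF h(3)] assms(8) w'V] .
  have "F (p, q') (p', q') (m1 - u') = F (p', q) (p', q') (m2 + w')"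
    unfolding map_diff[OF h(2,4) le(1) assms(7) u'V] map_add[OF h(3,4) le(2) assms(8) w'V] Fu' Fw'
    using uw(3) unfolding n_def by (simp add: algebra_simps eq_diff_eq diff_eq_eq)
  from middle_exact_lift[of p p' q q', OF assms(2) assms(4) h(1) h(2) h(3) h(4) m1u m2w this]
  obtain e where e: "e \<in> V (p, q)" "F (p, q) (p, q') e = m1 - u'" by blast
  have "F (p, q) (r1, r2) e = F (p, q') (r1, r2) (m1 - u')"
    using map_comp[OF h(1,2,5) le(6,7) e(1)] e(2) by simp
  also have "\<dots> = F (p, q') (r1, r2) m1 - F (x, q') (r1, r2) u"
    using map_diff[OF h(2,5) le(7) assms(7) u'V] map_comp[OF h(6,2,5) le(4,7) uw(1)] unfolding u'_def by simp
  finally have "F (p, q) (r1, r2) e - F (p, q') (r1, r2) m1 = - F (x, q') (r1, r2) u" by simp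
  moreover have "F (x, q') (r1, r2) u \<in> edge_img r1 r2"
    using edge_img_left[of r1 q' r2 u] assms uw(1) square by simp
  moreover have "vs.subspace (edge_img r1 r2)" using edge_img_sub(1)[of r1 r2] assms by simp
  ultimately have "F (p, q) (r1, r2) e - F (p, q') (r1, r2) m1 \<in> edge_img r1 r2"
    using vs.subspace_neg by metis
  thus ?thesis using e(1) by blast
qed

lemma edge_img_meet_ordered:
  assumes "x \<le> p1" "y \<le> q1" "p1 \<le> p2" "y \<le> q2" "p2 \<le> r1" "q1 \<le> r2" "q2 \<le> r2"
    "m1 \<in> V (p1, q1)" "m2 \<in> V (p2, q2)" "F (p1, q1) (r1, r2) m1 - F (p2, q2) (r1, r2) m2 \<in> edge_img r1 r2"
  shows "\<exists>e\<in>V (min p1 p2, min q1 q2). F (min p1 p2, min q1 q2) (r1, r2) e - F (p1, q1) (r1, r2) m1 \<in> edge_img r1 r2"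
proof (cases "q2 \<le> q1")
  case True
  have "min p1 p2 = p1" "min q1 q2 = q2" using True assms by auto
  thus ?thesis using edge_img_square[of p1 p2 q2 q1 r1 r2 m1 m2] assms True by simp
next
  case False
  have "min p1 p2 = p1" "min q1 q2 = q1" using False assms by auto
  moreover have "0 \<in> edge_img r1 r2" using vs.subspace_0[OF edge_img_sub(1)[of r1 r2]] assms by simp
  ultimately show ?thesis using assms(8) by (intro bexI[of _ m1]) auto
qed

lemma edge_img_meet:
  assumes "x \<le> p1" "y \<le> q1" "x \<le> p2" "y \<le> q2" "p1 \<le> r1" "q1 \<le> r2" "p2 \<le> r1" "q2 \<le> r2"
    "m1 \<in> V (p1, q1)" "m2 \<in> V (p2, q2)" "F (p1, q1) (r1, r2) m1 - F (p2, q2) (r1, r2) m2 \<in> edge_img r1 r2"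
  shows "\<exists>e\<in>V (min p1 p2, min q1 q2). F (min p1 p2, min q1 q2) (r1, r2) e - F (p1, q1) (r1, r2) m1 \<in> edge_img r1 r2"
proof (cases "p1 \<le> p2")
  case True thus ?thesis using edge_img_meet_ordered[of p1 q1 p2 q2 r1 r2 m1 m2] assms by simp
next
  case False
  have Isub: "vs.subspace (edge_img r1 r2)" using edge_img_sub(1)[of r1 r2] assms by simp
  have "F (p2, q2) (r1, r2) m2 - F (p1, q1) (r1, r2) m1 = - (F (p1, q1) (r1, r2) m1 - F (p2, q2) (r1, r2) m2)"
    by simp
  hence h: "F (p2, q2) (r1, r2) m2 - F (p1, q1) (r1, r2) m1 \<in> edge_img r1 r2"
    using vs.subspace_neg[OF Isub assms(11)] by simp
  obtain e where e: "e \<in> V (min p2 p1, min q2 q1)" "F (min p2 p1, min q2 q1) (r1, r2) e - F (p2, q2) (r1, r2) m2 \<in> edge_img r1 r2"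
    using edge_img_meet_ordered[of p2 q2 p1 q1 r1 r2 m2 m1] assms False h by force
  have "F (min p2 p1, min q2 q1) (r1, r2) e - F (p1, q1) (r1, r2) m1 =
     (F (min p2 p1, min q2 q1) (r1, r2) e - F (p2, q2) (r1, r2) m2) - (F (p1, q1) (r1, r2) m1 - F (p2, q2) (r1, r2) m2)"
    by simp
  hence "F (min p2 p1, min q2 q1) (r1, r2) e - F (p1, q1) (r1, r2) m1 \<in> edge_img r1 r2"
    using vs.subspace_diff[OF Isub e(2) assms(11)] by simp
  thus ?thesis using e(1) unfolding min.commute[of p2 p1] min.commute[of q2 q1] by blast
qed

lemma edge_img_meet_pullback:
  assumes "x \<le> p1" "y \<le> q1" "x \<le> p2" "y \<le> q2" "p1 \<le> r1" "q1 \<le> r2" "p2 \<le> r1" "q2 \<le> r2"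
    "m1 \<in> V (p1, q1)" "m2 \<in> V (p2, q2)" "F (p1, q1) (r1, r2) m1 - F (p2, q2) (r1, r2) m2 \<in> edge_img r1 r2"
  shows "\<exists>e\<in>V (min p1 p2, min q1 q2). F (min p1 p2, min q1 q2) (p1, q1) e - m1 \<in> edge_img p1 q1"
proof -
  let ?s = "(min p1 p2, min q1 q2)"
  obtain e where e: "e \<in> V ?s" "F ?s (r1, r2) e - F (p1, q1) (r1, r2) m1 \<in> edge_img r1 r2"
    using edge_img_meet[OF assms] by blast
  have T: "?s \<in> T" "(p1, q1) \<in> T" "(r1, r2) \<in> T" and le: "?s \<le> (p1, q1)" "(p1, q1) \<le> (r1, r2)"
    using quadrant assms by auto
  have Fe: "F ?s (p1, q1) e \<in> V (p1, q1)"
    using map_in[OF T(1,2) le(1) e(1)] .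
  have "F (p1, q1) (r1, r2) (F ?s (p1, q1) e - m1) = F ?s (r1, r2) e - F (p1, q1) (r1, r2) m1"
    using map_diff[OF T(2,3) le(2) Fe assms(9)] map_comp[OF T le e(1)] by simp
  then have "F ?s (p1, q1) e - m1 \<in> edge_img p1 q1"
    using edge_img_reflect[of p1 r1 q1 r2] e(2) assms vs.subspace_diff[OF subspace_V[OF T(2)] Fe assms(9)]
    by simp
  then show ?thesis
    using e(1) by blast
qed

lemma square_strict: "x < x'" "y < y'"
proof -
  have hp: "(x, y) \<in> T" "(x, y') \<in> T" "(x', y) \<in> T" "(x', y') \<in> T"
    using quadrant square by auto
  show "x < x'"
  proof (rule ccontr)
    assume "\<not> x < x'" hence e: "x = x'" using square by simp
    have "z = F (x, y') (x', y') z - F (x', y) (x', y') 0"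
      using map_id[OF hp(4) zV] map_zero[of "(x', y)" "(x', y')"] hp square unfolding e by simp
    moreover have "0 \<in> V (x', y)" using vs.subspace_0[OF subspace_V[OF hp(3)]] .
    ultimately show False using z_not_in_image zV unfolding e by blast
  qed
  show "y < y'"
  proof (rule ccontr)
    assume "\<not> y < y'" hence e: "y = y'" using square by simp
    have "z = F (x, y') (x', y') 0 - F (x', y) (x', y') (- z)"
      using map_id[OF hp(4)] map_zero[of "(x, y')" "(x', y')"] hp square zV map_neg[of "(x', y')" "(x', y')" z]
      unfolding e by simp
    moreover have "0 \<in> V (x, y')" using vs.subspace_0[OF subspace_V[OF hp(2)]] .
    moreover have "- z \<in> V (x', y)" using vs.subspace_neg[OF subspace_V[OF hp(4)] zV] unfolding e .
    ultimately show False using z_not_in_image unfolding e by blast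
  qed
qed

lemma z_notin_edge_img: "z \<notin> edge_img x' y'"
proof
  assume "z \<in> edge_img x' y'"
  then obtain u w where uw: "u \<in> V (x, y')" "w \<in> V (x', y)" "z = F (x, y') (x', y') u + F (x', y) (x', y') w"
    unfolding edge_img_def by blast
  have hp: "(x', y) \<in> T" "(x', y') \<in> T" using quadrant square by auto
  have "z = F (x, y') (x', y') u - F (x', y) (x', y') (- w)" using uw(3) map_neg[OF hp _ uw(2)] square by simp
  moreover have "- w \<in> V (x', y)" using vs.subspace_neg[OF subspace_V[OF hp(1)] uw(2)] .
  ultimately show False using z_not_in_image uw(1) by blast
qed

definition reach :: "real \<times> real \<Rightarrow> 'v set" where
  "reach s = {n \<in> V (x', y'). \<exists>m\<in>V s. n - F s (x', y') m \<in> edge_img x' y'}"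

lemma edge_img_corner: "vs.subspace (edge_img x' y')" "edge_img x' y' \<subseteq> V (x', y')"
  using edge_img_sub[of x' y'] square by auto

lemma reach_sub:
  assumes "x \<le> p" "p \<le> x'" "y \<le> q" "q \<le> y'"
  shows "vs.subspace (reach (p, q))" "edge_img x' y' \<subseteq> reach (p, q)" "reach (p, q) \<subseteq> V (x', y')"
proof -
  have h: "(p, q) \<in> T" "(x', y') \<in> T" using quadrant assms square by auto
  have le: "(p, q) \<le> (x', y')" using assms by auto
  note Is = edge_img_corner(1)
  show "reach (p, q) \<subseteq> V (x', y')" unfolding reach_def by blast
  show "edge_img x' y' \<subseteq> reach (p, q)"
  proof
    fix n assume n: "n \<in> edge_img x' y'"
    have "n - F (p, q) (x', y') 0 \<in> edge_img x' y'" using map_zero[OF h le] n by simp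
    thus "n \<in> reach (p, q)"
      unfolding reach_def using n edge_img_corner(2) vs.subspace_0[OF subspace_V[OF h(1)]] by blast
  qed
  show "vs.subspace (reach (p, q))"
  proof (rule vs.subspaceI)
    show "0 \<in> reach (p, q)"
      using \<open>edge_img x' y' \<subseteq> reach (p, q)\<close> vs.subspace_0[OF Is] by blast
  next
    fix n n' assume "n \<in> reach (p, q)" "n' \<in> reach (p, q)"
    then obtain m m' where mm: "n \<in> V (x', y')" "m \<in> V (p, q)" "n - F (p, q) (x', y') m \<in> edge_img x' y'"
      "n' \<in> V (x', y')" "m' \<in> V (p, q)" "n' - F (p, q) (x', y') m' \<in> edge_img x' y'" unfolding reach_def by blast
    have e: "(n + n') - F (p, q) (x', y') (m + m') = (n - F (p, q) (x', y') m) + (n' - F (p, q) (x', y') m')"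
      using map_add[OF h le mm(2,5)] by (simp add: algebra_simps)
    have "(n + n') - F (p, q) (x', y') (m + m') \<in> edge_img x' y'"
      unfolding e by (rule vs.subspace_add[OF Is mm(3,6)])
    thus "n + n' \<in> reach (p, q)" unfolding reach_def
      using vs.subspace_add[OF subspace_V[OF h(2)] mm(1,4)] vs.subspace_add[OF subspace_V[OF h(1)] mm(2,5)]
      by blast
  next
    fix c n assume "n \<in> reach (p, q)"
    then obtain m where mm: "n \<in> V (x', y')" "m \<in> V (p, q)" "n - F (p, q) (x', y') m \<in> edge_img x' y'"
      unfolding reach_def by blast
    have e: "sc c n - F (p, q) (x', y') (sc c m) = sc c (n - F (p, q) (x', y') m)"
      using map_scale[OF h le mm(2)] by (simp add: vs.scale_right_diff_distrib)
    have "sc c n - F (p, q) (x', y') (sc c m) \<in> edge_img x' y'"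
      unfolding e by (rule vs.subspace_scale[OF Is mm(3)])
    thus "sc c n \<in> reach (p, q)" unfolding reach_def
      using vs.subspace_scale[OF subspace_V[OF h(2)] mm(1)] vs.subspace_scale[OF subspace_V[OF h(1)] mm(2)]
      by blast
  qed
qed

lemma reach_mono:
  assumes "x \<le> p" "p \<le> p'" "p' \<le> x'" "y \<le> q" "q \<le> q'" "q' \<le> y'"
  shows "reach (p, q) \<subseteq> reach (p', q')"
proof
  have h: "(p, q) \<in> T" "(p', q') \<in> T" "(x', y') \<in> T" using quadrant assms square by auto
  have le: "(p, q) \<le> (p', q')" "(p', q') \<le> (x', y')" using assms by auto
  fix n assume "n \<in> reach (p, q)"
  then obtain m where mm: "n \<in> V (x', y')" "m \<in> V (p, q)" "n - F (p, q) (x', y') m \<in> edge_img x' y'"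
    unfolding reach_def by blast
  have "n - F (p', q') (x', y') (F (p, q) (p', q') m) \<in> edge_img x' y'"
    using map_comp[OF h le mm(2)] mm(3) by simp
  thus "n \<in> reach (p', q')" unfolding reach_def using mm(1) map_in[OF h(1,2) le(1) mm(2)] by blast
qed

lemma reach_left: assumes "y \<le> q" "q \<le> y'" shows "reach (x, q) \<subseteq> edge_img x' y'"
proof
  fix n assume "n \<in> reach (x, q)"
  then obtain m where mm: "n \<in> V (x', y')" "m \<in> V (x, q)" "n - F (x, q) (x', y') m \<in> edge_img x' y'"
    unfolding reach_def by blast
  have "F (x, q) (x', y') m \<in> edge_img x' y'"
    using edge_img_left[of x' q y' m] square square_strict assms mm(2) by simp
  from vs.subspace_add[OF edge_img_corner(1) mm(3) this] show "n \<in> edge_img x' y'" by simp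
qed

lemma reach_bottom: assumes "x \<le> p" "p \<le> x'" shows "reach (p, y) \<subseteq> edge_img x' y'"
proof
  fix n assume "n \<in> reach (p, y)"
  then obtain m where mm: "n \<in> V (x', y')" "m \<in> V (p, y)" "n - F (p, y) (x', y') m \<in> edge_img x' y'"
    unfolding reach_def by blast
  have "F (p, y) (x', y') m \<in> edge_img x' y'"
    using edge_img_bottom[of y' p x' m] square square_strict assms mm(2) by simp
  from vs.subspace_add[OF edge_img_corner(1) mm(3) this] show "n \<in> edge_img x' y'" by simp
qed

lemma reach_meet:
  assumes "x \<le> p1" "p1 \<le> x'" "y \<le> q1" "q1 \<le> y'" "x \<le> p2" "p2 \<le> x'" "y \<le> q2" "q2 \<le> y'"
    "n \<in> reach (p1, q1)" "n \<in> reach (p2, q2)"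
  shows "n \<in> reach (min p1 p2, min q1 q2)"
proof -
  obtain m1 where m1: "n \<in> V (x', y')" "m1 \<in> V (p1, q1)" "n - F (p1, q1) (x', y') m1 \<in> edge_img x' y'"
    using assms(9) unfolding reach_def by blast
  obtain m2 where m2: "m2 \<in> V (p2, q2)" "n - F (p2, q2) (x', y') m2 \<in> edge_img x' y'"
    using assms(10) unfolding reach_def by blast
  have "F (p1, q1) (x', y') m1 - F (p2, q2) (x', y') m2 = (n - F (p2, q2) (x', y') m2) - (n - F (p1, q1) (x', y') m1)"
    by simp
  hence "F (p1, q1) (x', y') m1 - F (p2, q2) (x', y') m2 \<in> edge_img x' y'"
    using vs.subspace_diff[OF edge_img_corner(1) m2(2) m1(3)] by simp
  then obtain e where e: "e \<in> V (min p1 p2, min q1 q2)"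
    "F (min p1 p2, min q1 q2) (x', y') e - F (p1, q1) (x', y') m1 \<in> edge_img x' y'"
    using edge_img_meet[of p1 q1 p2 q2 x' y' m1 m2] assms m1(2) m2(1) by blast
  have "n - F (min p1 p2, min q1 q2) (x', y') e = (n - F (p1, q1) (x', y') m1) - (F (min p1 p2, min q1 q2) (x', y') e - F (p1, q1) (x', y') m1)"
    by simp
  hence "n - F (min p1 p2, min q1 q2) (x', y') e \<in> edge_img x' y'"
    using vs.subspace_diff[OF edge_img_corner(1) m1(3) e(2)] by simp
  thus ?thesis unfolding reach_def using m1(1) e(1) by blast
qed

lemma reach_corner: "reach (x', y') = V (x', y')"
proof
  show "reach (x', y') \<subseteq> V (x', y')" unfolding reach_def by blast
  show "V (x', y') \<subseteq> reach (x', y')"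
  proof
    fix n assume n: "n \<in> V (x', y')"
    have hp: "(x', y') \<in> T" using quadrant square by auto
    have "n - F (x', y') (x', y') n \<in> edge_img x' y'"
      using map_id[OF hp n] vs.subspace_0[OF edge_img_corner(1)] by simp
    thus "n \<in> reach (x', y')" unfolding reach_def using n by blast
  qed
qed

lemma corner_finite_span: "\<exists>W. finite W \<and> vs.span W = V (x', y')"
  using finite_span_V[of "(x', y')"] quadrant square by auto

section \<open>The block\<close>

definition J1 :: "real set" where
  "J1 = {p. x' \<le> p \<or> (x \<le> p \<and> p \<le> x' \<and> \<not> reach (p, y') \<subseteq> edge_img x' y')}"

lemma mem_J1_iff: "x \<le> p \<Longrightarrow> p \<le> x' \<Longrightarrow> p \<in> J1 \<longleftrightarrow> \<not> reach (p, y') \<subseteq> edge_img x' y'"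
  unfolding J1_def using reach_corner zV z_notin_edge_img by (cases "p = x'") auto

lemma x'_in_J1: "x' \<in> J1" unfolding J1_def by simp

lemma upclosed_J1: "upclosed J1"
  unfolding upclosed_def
proof (intro ballI allI impI)
  fix p p2 assume p: "p \<in> J1" "p \<le> p2"
  show "p2 \<in> J1"
  proof (cases "x' \<le> p2")
    case True thus ?thesis unfolding J1_def by simp
  next
    case False
    hence "x \<le> p" "p \<le> x'" "\<not> reach (p, y') \<subseteq> edge_img x' y'"
      using p unfolding J1_def by auto
    moreover have "reach (p, y') \<subseteq> reach (p2, y')"
      using reach_mono[of p p2 y' y'] calculation(1) p False square by simp
    ultimately show ?thesis unfolding J1_def using False p by auto
  qed
qed

lemma J1_gt: "p \<in> J1 \<Longrightarrow> x < p"
proof -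
  assume p: "p \<in> J1"
  show "x < p"
  proof (rule ccontr)
    assume "\<not> x < p"
    hence "p \<le> x" by simp
    hence "p = x" "p \<le> x'" using p square_strict unfolding J1_def by auto
    thus False using mem_J1_iff[of p] p reach_left[of y'] square by simp
  qed
qed

lemma J1_ge: "p \<in> J1 \<Longrightarrow> x \<le> p"
  using J1_gt less_imp_le by blast

definition p1 :: real where
  "p1 = (SOME p. p \<in> J1 \<and> p \<le> x' \<and> (\<forall>p'. p' \<in> J1 \<and> p' \<le> x' \<longrightarrow> reach (p, y') \<subseteq> reach (p', y')))"

lemma p1_props: "p1 \<in> J1" "p1 \<le> x'" "\<And>p. p \<in> J1 \<Longrightarrow> p \<le> x' \<Longrightarrow> reach (p1, y') \<subseteq> reach (p, y')"
proof -
  obtain W where W: "finite W" "vs.span W = V (x', y')"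
    using corner_finite_span by blast
  have "\<exists>p0\<in>{p. p \<in> J1 \<and> p \<le> x'}. \<forall>p\<in>{p. p \<in> J1 \<and> p \<le> x'}. reach (p0, y') \<subseteq> reach (p, y')"
  proof (rule vs.subspace_chain_has_least[OF _ _ _ W(1)])
    show "x' \<in> {p. p \<in> J1 \<and> p \<le> x'}"
      using x'_in_J1 by simp
    show "vs.subspace (reach (p, y'))" "reach (p, y') \<subseteq> vs.span W" if "p \<in> {p. p \<in> J1 \<and> p \<le> x'}" for p
      using reach_sub[of p y'] J1_ge that square W(2) by auto
    show "reach (p, y') \<subseteq> reach (p', y') \<or> reach (p', y') \<subseteq> reach (p, y')"
      if "p \<in> {p. p \<in> J1 \<and> p \<le> x'}" "p' \<in> {p. p \<in> J1 \<and> p \<le> x'}" for p p'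
      using reach_mono[of p p' y' y'] reach_mono[of p' p y' y'] J1_ge that square by force
  qed
  then have "\<exists>p. p \<in> J1 \<and> p \<le> x' \<and> (\<forall>p'. p' \<in> J1 \<and> p' \<le> x' \<longrightarrow> reach (p, y') \<subseteq> reach (p', y'))"
    by blast
  from someI_ex[OF this] show "p1 \<in> J1" "p1 \<le> x'" "\<And>p. p \<in> J1 \<Longrightarrow> p \<le> x' \<Longrightarrow> reach (p1, y') \<subseteq> reach (p, y')"
    unfolding p1_def[symmetric] by blast+
qed

definition R1 :: "'v set" where "R1 = reach (p1, y')"

lemma R1_props: "vs.subspace R1" "R1 \<subseteq> V (x', y')" "\<not> R1 \<subseteq> edge_img x' y'" "\<And>p. p \<in> J1 \<Longrightarrow> p \<le> x' \<Longrightarrow> R1 \<subseteq> reach (p, y')"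
proof -
  have "x \<le> p1"
    using J1_gt[OF p1_props(1)] by simp
  then show "vs.subspace R1" "R1 \<subseteq> V (x', y')" "\<not> R1 \<subseteq> edge_img x' y'"
    unfolding R1_def using reach_sub[of p1 y'] mem_J1_iff[of p1] p1_props(1,2) square by auto
qed (use p1_props(3) R1_def in simp)

definition J2 :: "real set" where
  "J2 = {q. y' \<le> q \<or> (y \<le> q \<and> q \<le> y' \<and> \<not> reach (x', q) \<inter> R1 \<subseteq> edge_img x' y')}"

lemma mem_J2_iff: "y \<le> q \<Longrightarrow> q \<le> y' \<Longrightarrow> q \<in> J2 \<longleftrightarrow> \<not> reach (x', q) \<inter> R1 \<subseteq> edge_img x' y'"
  unfolding J2_def using reach_corner R1_props(2,3) by (cases "q = y'") auto

lemma y'_in_J2: "y' \<in> J2" unfolding J2_def by simp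

lemma upclosed_J2: "upclosed J2"
  unfolding upclosed_def
proof (intro ballI allI impI)
  fix q q2 assume q: "q \<in> J2" "q \<le> q2"
  show "q2 \<in> J2"
  proof (cases "y' \<le> q2")
    case True thus ?thesis unfolding J2_def by simp
  next
    case False
    hence "y \<le> q" "q \<le> y'" "\<not> reach (x', q) \<inter> R1 \<subseteq> edge_img x' y'"
      using q unfolding J2_def by auto
    moreover have "reach (x', q) \<subseteq> reach (x', q2)"
      using reach_mono[of x' x' q q2] calculation(1) q False square by simp
    ultimately show ?thesis unfolding J2_def using False q by auto
  qed
qed

lemma J2_gt: "q \<in> J2 \<Longrightarrow> y < q"
proof -
  assume q: "q \<in> J2"
  show "y < q"
  proof (rule ccontr)
    assume "\<not> y < q"
    hence "q \<le> y" by simp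
    hence "q = y" "q \<le> y'" using q square_strict unfolding J2_def by auto
    thus False using mem_J2_iff[of q] q reach_bottom[of x'] square by auto
  qed
qed

lemma J2_ge: "q \<in> J2 \<Longrightarrow> y \<le> q"
  using J2_gt less_imp_le by blast

definition q1 :: real where
  "q1 = (SOME q. q \<in> J2 \<and> q \<le> y' \<and> (\<forall>q'. q' \<in> J2 \<and> q' \<le> y' \<longrightarrow> reach (x', q) \<inter> R1 \<subseteq> reach (x', q') \<inter> R1))"

lemma q1_props: "q1 \<in> J2" "q1 \<le> y'" "\<And>q. q \<in> J2 \<Longrightarrow> q \<le> y' \<Longrightarrow> reach (x', q1) \<inter> R1 \<subseteq> reach (x', q) \<inter> R1"
proof -
  obtain W where W: "finite W" "vs.span W = V (x', y')"
    using corner_finite_span by blast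
  have "\<exists>q0\<in>{q. q \<in> J2 \<and> q \<le> y'}. \<forall>q\<in>{q. q \<in> J2 \<and> q \<le> y'}. reach (x', q0) \<inter> R1 \<subseteq> reach (x', q) \<inter> R1"
  proof (rule vs.subspace_chain_has_least[OF _ _ _ W(1)])
    show "y' \<in> {q. q \<in> J2 \<and> q \<le> y'}"
      using y'_in_J2 by simp
    show "vs.subspace (reach (x', q) \<inter> R1)" "reach (x', q) \<inter> R1 \<subseteq> vs.span W"
      if "q \<in> {q. q \<in> J2 \<and> q \<le> y'}" for q
      using vs.subspace_inter[OF reach_sub(1)[of x' q] R1_props(1)] reach_sub(3)[of x' q] J2_ge that square W(2)
      by auto
    show "reach (x', q) \<inter> R1 \<subseteq> reach (x', q') \<inter> R1 \<or> reach (x', q') \<inter> R1 \<subseteq> reach (x', q) \<inter> R1"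
      if "q \<in> {q. q \<in> J2 \<and> q \<le> y'}" "q' \<in> {q. q \<in> J2 \<and> q \<le> y'}" for q q'
      using reach_mono[of x' x' q q'] reach_mono[of x' x' q' q] J2_ge that square by force
  qed
  then have "\<exists>q. q \<in> J2 \<and> q \<le> y' \<and> (\<forall>q'. q' \<in> J2 \<and> q' \<le> y' \<longrightarrow> reach (x', q) \<inter> R1 \<subseteq> reach (x', q') \<inter> R1)"
    by blast
  from someI_ex[OF this] show "q1 \<in> J2" "q1 \<le> y'" "\<And>q. q \<in> J2 \<Longrightarrow> q \<le> y' \<Longrightarrow> reach (x', q1) \<inter> R1 \<subseteq> reach (x', q) \<inter> R1"
    unfolding q1_def[symmetric] by blast+
qed

definition R2 :: "'v set" where "R2 = reach (x', q1) \<inter> R1"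

lemma R2_props: "\<not> R2 \<subseteq> edge_img x' y'" "\<And>q. q \<in> J2 \<Longrightarrow> q \<le> y' \<Longrightarrow> R2 \<subseteq> reach (x', q) \<inter> R1"
proof -
  have "y \<le> q1"
    using J2_gt[OF q1_props(1)] by simp
  then show "\<not> R2 \<subseteq> edge_img x' y'"
    unfolding R2_def using mem_J2_iff[of q1] q1_props(1,2) by simp
qed (use q1_props(3) R2_def in simp)

definition z0 :: 'v where "z0 = (SOME v. v \<in> R2 \<and> v \<notin> edge_img x' y')"

lemma z0_props: "z0 \<in> R2" "z0 \<notin> edge_img x' y'" "z0 \<in> V (x', y')" "z0 \<in> R1"
proof -
  have "\<exists>v. v \<in> R2 \<and> v \<notin> edge_img x' y'" using R2_props(1) by blast
  from someI_ex[OF this] show "z0 \<in> R2" "z0 \<notin> edge_img x' y'" unfolding z0_def[symmetric] by blast+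
  thus "z0 \<in> V (x', y')" "z0 \<in> R1" using R1_props(2) unfolding R2_def by auto
qed

lemma z0_in_reach: assumes "p \<in> J1" "q \<in> J2" "p \<le> x'" "q \<le> y'" shows "z0 \<in> reach (p, q)"
proof -
  have a: "x \<le> p" "y \<le> q" using J1_gt[OF assms(1)] J2_gt[OF assms(2)] by auto
  have "z0 \<in> reach (p, y')" using R1_props(4)[OF assms(1,3)] z0_props(4) by blast
  moreover have "z0 \<in> reach (x', q)" using R2_props(2)[OF assms(2,4)] z0_props(1) by blast
  ultimately have "z0 \<in> reach (min p x', min y' q)"
    using reach_meet[of p y' x' q z0] a assms square by simp
  thus ?thesis using assms by (simp add: min_absorb1 min_absorb2)
qed

definition Nout :: "real \<Rightarrow> real \<Rightarrow> 'v set" where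
  "Nout r1 r2 = {a + b | a b. a \<in> (\<Union>p0\<in>{p0. x \<le> p0 \<and> p0 \<notin> J1}. F (p0, r2) (r1, r2) ` V (p0, r2)) \<and>
     b \<in> (\<Union>q0\<in>{q0. y \<le> q0 \<and> q0 \<notin> J2}. F (r1, q0) (r1, r2) ` V (r1, q0))}"

lemma NoutI: "x \<le> p0 \<Longrightarrow> p0 \<notin> J1 \<Longrightarrow> y \<le> q0 \<Longrightarrow> q0 \<notin> J2 \<Longrightarrow> m1 \<in> V (p0, r2) \<Longrightarrow> m2 \<in> V (r1, q0)
   \<Longrightarrow> F (p0, r2) (r1, r2) m1 + F (r1, q0) (r1, r2) m2 \<in> Nout r1 r2"
  unfolding Nout_def by blast

lemma NoutE: "v \<in> Nout r1 r2 \<Longrightarrow> \<exists>p0 q0 m1 m2. x \<le> p0 \<and> p0 \<notin> J1 \<and> y \<le> q0 \<and> q0 \<notin> J2 \<and> m1 \<in> V (p0, r2) \<and> m2 \<in> V (r1, q0)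
   \<and> v = F (p0, r2) (r1, r2) m1 + F (r1, q0) (r1, r2) m2"
  unfolding Nout_def by blast

lemma notin_J1_lt: "p \<notin> J1 \<Longrightarrow> p < x'" unfolding J1_def by auto
lemma notin_J2_lt: "q \<notin> J2 \<Longrightarrow> q < y'" unfolding J2_def by auto
lemma x_notin_J1: "x \<notin> J1" using J1_gt[of x] by auto
lemma y_notin_J2: "y \<notin> J2" using J2_gt[of y] by auto

lemma Nout_sub:
  assumes "x' \<le> r1" "y' \<le> r2"
  shows "vs.subspace (Nout r1 r2)" "Nout r1 r2 \<subseteq> V (r1, r2)"
proof -
  have r: "(r1, r2) \<in> T"
    using quadrant assms square by auto
  have left: "(p0, r2) \<in> T" "(p0, r2) \<le> (r1, r2)" if "p0 \<in> {p0. x \<le> p0 \<and> p0 \<notin> J1}" for p0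
    using quadrant that assms square notin_J1_lt[of p0] by auto
  have bottom: "(r1, q0) \<in> T" "(r1, q0) \<le> (r1, r2)" if "q0 \<in> {q0. y \<le> q0 \<and> q0 \<notin> J2}" for q0
    using quadrant that assms square notin_J2_lt[of q0] by auto
  have "vs.subspace (\<Union>p0\<in>{p0. x \<le> p0 \<and> p0 \<notin> J1}. F (p0, r2) (r1, r2) ` V (p0, r2))"
  proof (rule vs.subspace_UN_chain)
    show "{p0. x \<le> p0 \<and> p0 \<notin> J1} \<noteq> {}"
      using x_notin_J1 by blast
    show "F (p0, r2) (r1, r2) ` V (p0, r2) \<subseteq> F (p0', r2) (r1, r2) ` V (p0', r2) \<or>
        F (p0', r2) (r1, r2) ` V (p0', r2) \<subseteq> F (p0, r2) (r1, r2) ` V (p0, r2)"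
      if "p0 \<in> {p0. x \<le> p0 \<and> p0 \<notin> J1}" "p0' \<in> {p0. x \<le> p0 \<and> p0 \<notin> J1}" for p0 p0'
      using image_mono[OF left(1)[OF that(1)] left(1)[OF that(2)] r] image_mono[OF left(1)[OF that(2)] left(1)[OF that(1)] r]
        left(2)[OF that(1)] left(2)[OF that(2)] by (cases "p0 \<le> p0'") auto
  qed (use image_subspace[OF _ r] left in blast)
  moreover have "vs.subspace (\<Union>q0\<in>{q0. y \<le> q0 \<and> q0 \<notin> J2}. F (r1, q0) (r1, r2) ` V (r1, q0))"
  proof (rule vs.subspace_UN_chain)
    show "{q0. y \<le> q0 \<and> q0 \<notin> J2} \<noteq> {}"
      using y_notin_J2 by blast
    show "F (r1, q0) (r1, r2) ` V (r1, q0) \<subseteq> F (r1, q0') (r1, r2) ` V (r1, q0') \<or>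
        F (r1, q0') (r1, r2) ` V (r1, q0') \<subseteq> F (r1, q0) (r1, r2) ` V (r1, q0)"
      if "q0 \<in> {q0. y \<le> q0 \<and> q0 \<notin> J2}" "q0' \<in> {q0. y \<le> q0 \<and> q0 \<notin> J2}" for q0 q0'
      using image_mono[OF bottom(1)[OF that(1)] bottom(1)[OF that(2)] r] image_mono[OF bottom(1)[OF that(2)] bottom(1)[OF that(1)] r]
        bottom(2)[OF that(1)] bottom(2)[OF that(2)] by (cases "q0 \<le> q0'") auto
  qed (use image_subspace[OF _ r] bottom in blast)
  ultimately show "vs.subspace (Nout r1 r2)"
    unfolding Nout_def by (rule vs.subspace_sums)
  show "Nout r1 r2 \<subseteq> V (r1, r2)"
    unfolding Nout_def using map_in[OF _ r] left bottom vs.subspace_add[OF subspace_V[OF r]] by blast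
qed

lemma map_to_Nout:
  assumes "x' \<le> r1" "y' \<le> r2" "s \<in> T" "s \<le> (r1, r2)" "s \<notin> J1 \<times> J2" "m \<in> V s"
  shows "F s (r1, r2) m \<in> Nout r1 r2"
proof -
  obtain s1 s2 where s: "s = (s1, s2)" by (cases s)
  have ht: "(r1, r2) \<in> T" using quadrant assms square square_strict by auto
  show ?thesis
  proof (cases "s1 \<in> J1")
    case False
    define p0 where "p0 = max s1 x"
    have p0J: "p0 \<notin> J1" unfolding p0_def using False x_notin_J1 by (simp add: max_def)
    have h: "(p0, r2) \<in> T" "(r1, y) \<in> T"
      using quadrant assms square square_strict unfolding p0_def by auto
    have le: "s \<le> (p0, r2)" "(p0, r2) \<le> (r1, r2)" "(r1, y) \<le> (r1, r2)"
      using assms(4) notin_J1_lt[OF p0J] assms square square_strict unfolding s p0_def by auto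
    have "F s (r1, r2) m = F (p0, r2) (r1, r2) (F s (p0, r2) m) + F (r1, y) (r1, r2) 0"
      using map_comp[OF assms(3) h(1) ht le(1,2) assms(6)] map_zero[OF h(2) ht le(3)] by simp
    moreover have "x \<le> p0" unfolding p0_def by simp
    ultimately show ?thesis
      using NoutI[OF _ p0J order_refl y_notin_J2 map_in[OF assms(3) h(1) le(1) assms(6)] vs.subspace_0[OF subspace_V[OF h(2)]]]
      by simp
  next
    case True
    hence s2J: "s2 \<notin> J2" using assms(5) s by auto
    define q0 where "q0 = max s2 y"
    have q0J: "q0 \<notin> J2" unfolding q0_def using s2J y_notin_J2 by (simp add: max_def)
    have h: "(r1, q0) \<in> T" "(x, r2) \<in> T"
      using quadrant assms square square_strict unfolding q0_def by auto
    have le: "s \<le> (r1, q0)" "(r1, q0) \<le> (r1, r2)" "(x, r2) \<le> (r1, r2)"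
      using assms(4) notin_J2_lt[OF q0J] assms square square_strict unfolding s q0_def by auto
    have "F s (r1, r2) m = F (x, r2) (r1, r2) 0 + F (r1, q0) (r1, r2) (F s (r1, q0) m)"
      using map_comp[OF assms(3) h(1) ht le(1,2) assms(6)] map_zero[OF h(2) ht le(3)] by simp
    moreover have "y \<le> q0" unfolding q0_def by simp
    ultimately show ?thesis
      using NoutI[OF order_refl x_notin_J1 _ q0J vs.subspace_0[OF subspace_V[OF h(2)]] map_in[OF assms(3) h(1) le(1) assms(6)]]
      by simp
  qed
qed

lemma reach_notin_J1: "x \<le> p \<Longrightarrow> p \<notin> J1 \<Longrightarrow> reach (p, y') \<subseteq> edge_img x' y'"
  using mem_J1_iff[of p] notin_J1_lt[of p] by auto

lemma reach_notin_J2: "y \<le> q \<Longrightarrow> q \<notin> J2 \<Longrightarrow> reach (x', q) \<inter> R1 \<subseteq> edge_img x' y'"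
  using mem_J2_iff[of q] notin_J2_lt[of q] by auto

text \<open>If the image of z0 at r came from outside the block, pulling back twice along the
  edges would put z0 into reach (x', q0) \<inter> R1 for some q0 outside J2.\<close>
lemma z0_notin_Nout:
  assumes "x' \<le> r1" "y' \<le> r2"
  shows "F (x', y') (r1, r2) z0 \<notin> Nout r1 r2"
proof
  assume "F (x', y') (r1, r2) z0 \<in> Nout r1 r2"
  then obtain p0 q0 m1 m2 where pq: "x \<le> p0" "p0 \<notin> J1" "y \<le> q0" "q0 \<notin> J2"
    and m: "m1 \<in> V (p0, r2)" "m2 \<in> V (r1, q0)"
    and eq: "F (x', y') (r1, r2) z0 = F (p0, r2) (r1, r2) m1 + F (r1, q0) (r1, r2) m2"
    using NoutE by blast
  have "p0 \<le> x'" "q0 \<le> y'"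
    using notin_J1_lt[OF pq(2)] notin_J2_lt[OF pq(4)] by auto
  then have T: "(x', y') \<in> T" "(x', r2) \<in> T" "(r1, r2) \<in> T" "(p0, r2) \<in> T" "(x', q0) \<in> T"
    and le: "(x', y') \<le> (x', r2)" "(x', r2) \<le> (r1, r2)" "(p0, r2) \<le> (x', r2)" "(x', q0) \<le> (x', y')"
      "(x', q0) \<le> (x', r2)"
    using quadrant assms pq square by auto
  note z0V = z0_props(3)
  define n where "n = F (x', y') (x', r2) z0 - F (p0, r2) (x', r2) m1"
  have Fz0: "F (x', y') (x', r2) z0 \<in> V (x', r2)" and Fm1: "F (p0, r2) (x', r2) m1 \<in> V (x', r2)"
    using map_in[OF T(1,2) le(1) z0V] map_in[OF T(4,2) le(3) m(1)] .
  then have nV: "n \<in> V (x', r2)"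
    unfolding n_def by (rule vs.subspace_diff[OF subspace_V[OF T(2)]])
  have "F (x', r2) (r1, r2) n - F (r1, q0) (r1, r2) m2 = 0"
    unfolding n_def map_diff[OF T(2,3) le(2) Fz0 Fm1] map_comp[OF T(1-3) le(1,2) z0V]
      map_comp[OF T(4,2,3) le(3,2) m(1)] eq by simp
  moreover have "min x' r1 = x'" "min r2 q0 = q0"
    using assms square \<open>q0 \<le> y'\<close> by auto
  ultimately obtain e where e: "e \<in> V (x', q0)" "F (x', q0) (x', r2) e - n \<in> edge_img x' r2"
    using edge_img_meet_pullback[of x' r2 r1 q0 r1 r2 n m2] assms pq square \<open>q0 \<le> y'\<close> nV m(2)
      vs.subspace_0[OF edge_img_sub(1)[of r1 r2]] by auto
  define z1 where "z1 = z0 - F (x', q0) (x', y') e"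
  have Fe: "F (x', q0) (x', y') e \<in> V (x', y')"
    using map_in[OF T(5,1) le(4) e(1)] .
  then have z1V: "z1 \<in> V (x', y')"
    unfolding z1_def by (rule vs.subspace_diff[OF subspace_V[OF T(1)] z0V])
  have "F (x', y') (x', r2) z1 - F (p0, r2) (x', r2) m1 = - (F (x', q0) (x', r2) e - n)"
    unfolding z1_def n_def map_diff[OF T(1,2) le(1) z0V Fe] map_comp[OF T(5,1,2) le(4,1) e(1)] by simp
  then have "F (x', y') (x', r2) z1 - F (p0, r2) (x', r2) m1 \<in> edge_img x' r2"
    using vs.subspace_neg[OF edge_img_sub(1)[of x' r2] e(2)] assms square by simp
  moreover have "min x' p0 = p0" "min y' r2 = y'"
    using assms \<open>p0 \<le> x'\<close> by auto
  ultimately obtain e' where e': "e' \<in> V (p0, y')" "F (p0, y') (x', y') e' - z1 \<in> edge_img x' y'"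
    using edge_img_meet_pullback[of x' y' p0 r2 x' r2 z1 m1] assms pq square \<open>p0 \<le> x'\<close> z1V m(1)
    by auto
  then have "z1 \<in> reach (p0, y')"
    using vs.subspace_neg[OF edge_img_corner(1) e'(2)] z1V unfolding reach_def by auto
  then have "z0 - F (x', q0) (x', y') e \<in> edge_img x' y'"
    using reach_notin_J1[OF pq(1,2)] unfolding z1_def by blast
  then have "z0 \<in> reach (x', q0) \<inter> R1"
    using z0V e(1) z0_props(4) unfolding reach_def by blast
  then show False
    using reach_notin_J2[OF pq(3,4)] z0_props(2) by blast
qed

section \<open>A natural functional vanishing outside the block\<close>

definition diag :: "nat \<Rightarrow> real \<times> real" where "diag n = (x' + real n, y' + real n)"

lemma diag_in_T: "diag n \<in> T" unfolding diag_def using quadrant square_strict square by auto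
lemma diag_mono: "n \<le> k \<Longrightarrow> diag n \<le> diag k" unfolding diag_def by auto
lemma corner_le_diag: "(x', y') \<le> diag n" unfolding diag_def by auto
lemma diag_0: "diag 0 = (x', y')" unfolding diag_def by simp

abbreviation Ndiag :: "nat \<Rightarrow> 'v set" where "Ndiag n \<equiv> Nout (fst (diag n)) (snd (diag n))"

lemma Ndiag_sub: "vs.subspace (Ndiag n)" "Ndiag n \<subseteq> V (diag n)"
  using Nout_sub[of "fst (diag n)" "snd (diag n)"] unfolding diag_def by auto

lemma map_to_Ndiag: "s \<in> T \<Longrightarrow> s \<le> diag n \<Longrightarrow> s \<notin> J1 \<times> J2 \<Longrightarrow> m \<in> V s \<Longrightarrow> F s (diag n) m \<in> Ndiag n"
  using map_to_Nout[of "fst (diag n)" "snd (diag n)" s m] unfolding diag_def by auto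

lemma Ndiag_map: assumes "n \<le> k" "m \<in> Ndiag n" shows "F (diag n) (diag k) m \<in> Ndiag k"
proof -
  from NoutE[OF assms(2)] obtain p0 q0 m1 m2 where A: "x \<le> p0" "p0 \<notin> J1" "y \<le> q0" "q0 \<notin> J2"
    "m1 \<in> V (p0, snd (diag n))" "m2 \<in> V (fst (diag n), q0)"
    "m = F (p0, snd (diag n)) (fst (diag n), snd (diag n)) m1 + F (fst (diag n), q0) (fst (diag n), snd (diag n)) m2" by blast
  have TT: "(fst (diag n), snd (diag n)) = diag n" by simp
  have h: "(p0, snd (diag n)) \<in> T" "(fst (diag n), q0) \<in> T"
    using quadrant A square square_strict unfolding diag_def by auto
  have le: "(p0, snd (diag n)) \<le> diag n" "(fst (diag n), q0) \<le> diag n"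
    using notin_J1_lt[OF A(2)] notin_J2_lt[OF A(4)] unfolding diag_def by auto
  have le2: "diag n \<le> diag k" using diag_mono[OF assms(1)] .
  have F1: "F (p0, snd (diag n)) (diag n) m1 \<in> V (diag n)" using map_in[OF h(1) diag_in_T le(1) A(5)] .
  have F2: "F (fst (diag n), q0) (diag n) m2 \<in> V (diag n)" using map_in[OF h(2) diag_in_T le(2) A(6)] .
  have "F (diag n) (diag k) m = F (p0, snd (diag n)) (diag k) m1 + F (fst (diag n), q0) (diag k) m2"
    unfolding A(7) TT map_add[OF diag_in_T diag_in_T le2 F1 F2] map_comp[OF h(1) diag_in_T diag_in_T le(1) le2 A(5)] map_comp[OF h(2) diag_in_T diag_in_T le(2) le2 A(6)] ..
  moreover have "F (p0, snd (diag n)) (diag k) m1 \<in> Ndiag k"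
    using map_to_Ndiag[OF h(1) order.trans[OF le(1) le2] _ A(5)] A(2) by auto
  moreover have "F (fst (diag n), q0) (diag k) m2 \<in> Ndiag k"
    using map_to_Ndiag[OF h(2) order.trans[OF le(2) le2] _ A(6)] A(4) by auto
  ultimately show ?thesis using vs.subspace_add[OF Ndiag_sub(1)] by simp
qed

lemma z0_diag: "F (x', y') (diag n) z0 \<in> V (diag n)" "F (x', y') (diag n) z0 \<notin> Ndiag n"
proof -
  show "F (x', y') (diag n) z0 \<in> V (diag n)"
    using map_in[OF corner_in_T diag_in_T corner_le_diag z0_props(3)] .
  show "F (x', y') (diag n) z0 \<notin> Ndiag n"
    using z0_notin_Nout[of "fst (diag n)" "snd (diag n)"] unfolding diag_def by auto
qed

text \<open>Functionals are set to 0 off V (diag n), so that restrictions compare as functions.\<close>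
definition Phi :: "nat \<Rightarrow> ('v \<Rightarrow> 'k) set" where
  "Phi n = {f. lin_on sc (*) (V (diag n)) f \<and> (\<forall>m\<in>Ndiag n. f m = 0) \<and> f (F (x', y') (diag n) z0) = 1 \<and> (\<forall>m. m \<notin> V (diag n) \<longrightarrow> f m = 0)}"

definition restr :: "nat \<Rightarrow> nat \<Rightarrow> ('v \<Rightarrow> 'k) \<Rightarrow> ('v \<Rightarrow> 'k)" where
  "restr n k f = (\<lambda>m. if m \<in> V (diag n) then f (F (diag n) (diag k) m) else 0)"

lemma restr_Phi: assumes "n \<le> k" "f \<in> Phi k" shows "restr n k f \<in> Phi n"
proof -
  have le: "diag n \<le> diag k" using diag_mono[OF assms(1)] .
  have f: "lin_on sc (*) (V (diag k)) f" "\<forall>m\<in>Ndiag k. f m = 0" "f (F (x', y') (diag k) z0) = 1"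
    using assms(2) unfolding Phi_def by auto
  have S: "vs.subspace (V (diag n))" using subspace_V[OF diag_in_T] .
  have "lin_on sc (*) (V (diag n)) (restr n k f)"
    unfolding lin_on_def restr_def
  proof (intro conjI ballI allI)
    fix a b assume ab: "a \<in> V (diag n)" "b \<in> V (diag n)"
    show "(if a + b \<in> V (diag n) then f (F (diag n) (diag k) (a + b)) else 0) =
      (if a \<in> V (diag n) then f (F (diag n) (diag k) a) else 0) + (if b \<in> V (diag n) then f (F (diag n) (diag k) b) else 0)"
      using ab vs.subspace_add[OF S ab] map_add[OF diag_in_T diag_in_T le ab] f(1) map_in[OF diag_in_T diag_in_T le]
      unfolding lin_on_def by simp
  next
    fix c a assume a: "a \<in> V (diag n)"
    show "(if sc c a \<in> V (diag n) then f (F (diag n) (diag k) (sc c a)) else 0) = c * (if a \<in> V (diag n) then f (F (diag n) (diag k) a) else 0)"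
      using a vs.subspace_scale[OF S a] map_scale[OF diag_in_T diag_in_T le a] f(1) map_in[OF diag_in_T diag_in_T le a]
      unfolding lin_on_def by simp
  qed
  moreover have "\<forall>m\<in>Ndiag n. restr n k f m = 0"
    using Ndiag_map[OF assms(1)] f(2) Ndiag_sub(2) unfolding restr_def by auto
  moreover have "restr n k f (F (x', y') (diag n) z0) = 1"
  proof -
      have "F (diag n) (diag k) (F (x', y') (diag n) z0) = F (x', y') (diag k) z0"
      using map_comp[OF corner_in_T diag_in_T diag_in_T corner_le_diag le z0_props(3)] .
    thus ?thesis unfolding restr_def using z0_diag(1) f(3) by simp
  qed
  moreover have "\<forall>m. m \<notin> V (diag n) \<longrightarrow> restr n k f m = 0"
    unfolding restr_def by simp
  ultimately show ?thesis unfolding Phi_def by blast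
qed

lemma restr_comp: assumes "n \<le> k" "k \<le> l" shows "restr n k (restr k l f) = restr n l f"
proof
  fix m
  have le: "diag n \<le> diag k" "diag k \<le> diag l" using diag_mono assms by auto
  show "restr n k (restr k l f) m = restr n l f m"
    unfolding restr_def
    using map_in[OF diag_in_T diag_in_T le(1)] map_comp[OF diag_in_T diag_in_T diag_in_T le] by simp
qed

lemma restr_id: "f \<in> Phi n \<Longrightarrow> restr n n f = f"
proof
  fix m assume "f \<in> Phi n"
  thus "restr n n f m = f m" unfolding restr_def Phi_def using map_id[OF diag_in_T] by auto
qed

lemma truncation_in_Phi:
  assumes "lin_on sc (*) UNIV f" "\<forall>m\<in>Ndiag n. f m = 0" "f (F (x', y') (diag n) z0) = 1"
  shows "(\<lambda>m. if m \<in> V (diag n) then f m else 0) \<in> Phi n"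
  using assms z0_diag(1) Ndiag_sub(2) vs.subspace_add[OF subspace_V[OF diag_in_T]]
    vs.subspace_scale[OF subspace_V[OF diag_in_T]]
  unfolding Phi_def lin_on_def by auto

lemma Phi_nonempty: "Phi n \<noteq> {}"
  using vs.exists_functional_separating[OF Ndiag_sub(1) z0_diag(2)] truncation_in_Phi by blast

definition dies :: "nat \<Rightarrow> nat \<Rightarrow> 'v set" where "dies n k = {m \<in> V (diag n). F (diag n) (diag k) m \<in> Ndiag k}"

lemma dies_sub: assumes "n \<le> k" shows "vs.subspace (dies n k)"
proof -
  have le: "diag n \<le> diag k" using diag_mono[OF assms] .
  have S: "vs.subspace (V (diag n))" using subspace_V[OF diag_in_T] .
  show ?thesis
  proof (rule vs.subspaceI)
    show "0 \<in> dies n k"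
      unfolding dies_def
      using vs.subspace_0[OF S] map_zero[OF diag_in_T diag_in_T le] vs.subspace_0[OF Ndiag_sub(1)]
      by simp
  next
    fix a b assume "a \<in> dies n k" "b \<in> dies n k"
    hence ab: "a \<in> V (diag n)" "b \<in> V (diag n)" "F (diag n) (diag k) a \<in> Ndiag k" "F (diag n) (diag k) b \<in> Ndiag k"
      unfolding dies_def by auto
    show "a + b \<in> dies n k"
      unfolding dies_def
      using vs.subspace_add[OF S ab(1,2)] map_add[OF diag_in_T diag_in_T le ab(1,2)]
      vs.subspace_add[OF Ndiag_sub(1) ab(3,4)] by simp
  next
    fix c a assume "a \<in> dies n k"
    hence a: "a \<in> V (diag n)" "F (diag n) (diag k) a \<in> Ndiag k" unfolding dies_def by auto
    show "sc c a \<in> dies n k"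
      unfolding dies_def
      using vs.subspace_scale[OF S a(1)] map_scale[OF diag_in_T diag_in_T le a(1)]
      vs.subspace_scale[OF Ndiag_sub(1) a(2)] by simp
  qed
qed

lemma dies_mono: assumes "n \<le> k" "k \<le> k'" shows "dies n k \<subseteq> dies n k'"
proof
  fix m assume "m \<in> dies n k"
  hence m: "m \<in> V (diag n)" "F (diag n) (diag k) m \<in> Ndiag k" unfolding dies_def by auto
  have "F (diag k) (diag k') (F (diag n) (diag k) m) \<in> Ndiag k'" using Ndiag_map[OF assms(2) m(2)] .
  moreover have "F (diag k) (diag k') (F (diag n) (diag k) m) = F (diag n) (diag k') m"
    using map_comp[OF diag_in_T diag_in_T diag_in_T diag_mono[OF assms(1)] diag_mono[OF assms(2)] m(1)] .
  ultimately show "m \<in> dies n k'" unfolding dies_def using m(1) by simp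
qed

lemma restr_image:
  assumes "n \<le> k" shows "restr n k ` Phi k = {f \<in> Phi n. \<forall>m\<in>dies n k. f m = 0}"
proof
  show "restr n k ` Phi k \<subseteq> {f \<in> Phi n. \<forall>m\<in>dies n k. f m = 0}"
  proof
    fix f assume "f \<in> restr n k ` Phi k"
    then obtain g where g: "g \<in> Phi k" "f = restr n k g" by blast
    have "\<forall>m\<in>dies n k. f m = 0"
      unfolding g(2) restr_def dies_def using g(1) unfolding Phi_def by auto
    thus "f \<in> {f \<in> Phi n. \<forall>m\<in>dies n k. f m = 0}"
      using restr_Phi[OF assms g(1)] g(2) by simp
  qed
  show "{f \<in> Phi n. \<forall>m\<in>dies n k. f m = 0} \<subseteq> restr n k ` Phi k"
  proof
    fix f assume "f \<in> {f \<in> Phi n. \<forall>m\<in>dies n k. f m = 0}"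
    then have f: "lin_on sc (*) (V (diag n)) f" "f (F (x', y') (diag n) z0) = 1" "\<forall>m. m \<notin> V (diag n) \<longrightarrow> f m = 0"
      "\<And>m. m \<in> V (diag n) \<Longrightarrow> F (diag n) (diag k) m \<in> Ndiag k \<Longrightarrow> f m = 0"
      unfolding Phi_def dies_def by auto
    have le: "diag n \<le> diag k"
      using diag_mono[OF assms] .
    obtain f' where f': "lin_on sc (*) UNIV f'" "\<forall>m\<in>V (diag n). f' (F (diag n) (diag k) m) = f m" "\<forall>a\<in>Ndiag k. f' a = 0"
      using vs.exists_functional_factor[OF subspace_V[OF diag_in_T] Ndiag_sub(1) map_lin[OF diag_in_T diag_in_T le] f(1)] f(4)
      by blast
    have "F (x', y') (diag k) z0 = F (diag n) (diag k) (F (x', y') (diag n) z0)"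
      using map_comp[OF corner_in_T diag_in_T diag_in_T corner_le_diag le z0_props(3)] by simp
    then have "f' (F (x', y') (diag k) z0) = 1"
      using f'(2) z0_diag(1)[of n] f(2) by simp
    then have g: "(\<lambda>m. if m \<in> V (diag k) then f' m else 0) \<in> Phi k"
      using truncation_in_Phi f'(1,3) by blast
    have "f = restr n k (\<lambda>m. if m \<in> V (diag k) then f' m else 0)"
      unfolding restr_def using f'(2) f(3) map_in[OF diag_in_T diag_in_T le] by auto
    then show "f \<in> restr n k ` Phi k"
      using g by (rule image_eqI)
  qed
qed

lemma restr_image_stable: "\<exists>k0\<ge>n. \<forall>k\<ge>k0. restr n k ` Phi k = restr n k0 ` Phi k0"
proof -
  obtain W where W: "finite W" "W \<subseteq> V (diag n)" "vs.span W = V (diag n)"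
    using finite_span_V[OF diag_in_T] by blast
  have "\<exists>k0\<in>{n..}. \<forall>k\<in>{n..}. dies n k \<subseteq> dies n k0"
  proof (rule vs.subspace_chain_has_greatest[OF _ _ _ W(1)])
    show "n \<in> {n..}"
      by simp
    show "vs.subspace (dies n k)" "dies n k \<subseteq> vs.span W" if "k \<in> {n..}" for k
      using dies_sub that W(3) unfolding dies_def by auto
    show "dies n k \<subseteq> dies n k' \<or> dies n k' \<subseteq> dies n k" if "k \<in> {n..}" "k' \<in> {n..}" for k k'
      using dies_mono that by (metis atLeast_iff nat_le_linear)
  qed
  then obtain k0 where k0: "k0 \<ge> n" "\<And>k. k \<ge> n \<Longrightarrow> dies n k \<subseteq> dies n k0"
    by auto
  have eq: "dies n k = dies n k0" if "k \<ge> k0" for k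
    using k0(1) that by (intro subset_antisym k0(2) dies_mono[OF k0(1) that]) simp
  have "restr n k ` Phi k = restr n k0 ` Phi k0" if "k \<ge> k0" for k
    using restr_image[of n k] restr_image[of n k0] k0(1) that eq[OF that] by simp
  then show ?thesis
    using k0(1) by blast
qed

definition fsel :: "nat \<Rightarrow> 'v \<Rightarrow> 'k" where
  "fsel = (SOME sel. \<forall>n. sel n \<in> Phi n \<and> (\<forall>k\<ge>n. restr n k (sel k) = sel n))"

lemma fsel_Phi: "fsel n \<in> Phi n"
  and fsel_restr: "n \<le> k \<Longrightarrow> restr n k (fsel k) = fsel n"
proof -
  have "\<exists>sel. \<forall>n. sel n \<in> Phi n \<and> (\<forall>k\<ge>n. restr n k (sel k) = sel n)"
    using inverse_system_thread[where X=Phi and h=restr] restr_Phi restr_comp restr_id Phi_nonempty restr_image_stable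
    by blast
  from someI_ex[OF this] show "fsel n \<in> Phi n" "n \<le> k \<Longrightarrow> restr n k (fsel k) = fsel n"
    unfolding fsel_def[symmetric] by blast+
qed

definition diag_index :: "real \<times> real \<Rightarrow> nat" where "diag_index t = nat \<lceil>max (fst t - x') (snd t - y')\<rceil>"

lemma le_diag_index: "t \<le> diag (diag_index t)"
proof -
  obtain a b where t: "t = (a, b)" by (cases t)
  have "a - x' \<le> real (diag_index t)" "b - y' \<le> real (diag_index t)"
    unfolding diag_index_def t by (simp_all, linarith+)
  thus ?thesis unfolding diag_def t by auto
qed

definition phi :: "real \<times> real \<Rightarrow> 'v \<Rightarrow> 'k" where "phi t m = fsel (diag_index t) (F t (diag (diag_index t)) m)"

lemma fsel_move: assumes "n \<le> k" "m \<in> V (diag n)" shows "fsel n m = fsel k (F (diag n) (diag k) m)"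
proof -
  have "fsel n m = restr n k (fsel k) m" using fsel_restr[OF assms(1)] by simp
  thus ?thesis unfolding restr_def using assms(2) by simp
qed

lemma phi_eq: assumes "t \<in> T" "t \<le> diag n" "m \<in> V t" shows "phi t m = fsel n (F t (diag n) m)"
proof -
  define k where "k = diag_index t"
  have tk: "t \<le> diag k" unfolding k_def by (rule le_diag_index)
  have "fsel k (F t (diag k) m) = fsel n (F t (diag n) m)"
  proof (cases "n \<le> k")
    case True
    have "fsel n (F t (diag n) m) = fsel k (F (diag n) (diag k) (F t (diag n) m))"
      using fsel_move[OF True map_in[OF assms(1) diag_in_T assms(2,3)]] .
    also have "\<dots> = fsel k (F t (diag k) m)"
      using map_comp[OF assms(1) diag_in_T diag_in_T assms(2) diag_mono[OF True] assms(3)] by simp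
    finally show ?thesis by simp
  next
    case False
    hence kn: "k \<le> n" by simp
    have "fsel k (F t (diag k) m) = fsel n (F (diag k) (diag n) (F t (diag k) m))"
      using fsel_move[OF kn map_in[OF assms(1) diag_in_T tk assms(3)]] .
    also have "\<dots> = fsel n (F t (diag n) m)"
      using map_comp[OF assms(1) diag_in_T diag_in_T tk diag_mono[OF kn] assms(3)] by simp
    finally show ?thesis .
  qed
  thus ?thesis unfolding phi_def k_def by simp
qed

lemma phi_lin: assumes "t \<in> T" shows "lin_on sc (*) (V t) (phi t)"
proof -
  define n where "n = diag_index t"
  have tn: "t \<le> diag n" unfolding n_def by (rule le_diag_index)
  have fl: "lin_on sc (*) (V (diag n)) (fsel n)" using fsel_Phi[of n] unfolding Phi_def by blast
  have S: "vs.subspace (V t)" using subspace_V[OF assms] .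
  show ?thesis unfolding lin_on_def
  proof (intro conjI ballI allI)
    fix a b assume ab: "a \<in> V t" "b \<in> V t"
    show "phi t (a + b) = phi t a + phi t b"
      unfolding phi_eq[OF assms tn ab(1)] phi_eq[OF assms tn ab(2)] phi_eq[OF assms tn vs.subspace_add[OF S ab]]
        map_add[OF assms diag_in_T tn ab]
      using fl map_in[OF assms diag_in_T tn ab(1)] map_in[OF assms diag_in_T tn ab(2)]
      unfolding lin_on_def by blast
  next
    fix c a assume a: "a \<in> V t"
    show "phi t (sc c a) = c * phi t a"
      unfolding phi_eq[OF assms tn a] phi_eq[OF assms tn vs.subspace_scale[OF S a]] map_scale[OF assms diag_in_T tn a]
      using fl map_in[OF assms diag_in_T tn a] unfolding lin_on_def by blast
  qed
qed

lemma phi_nat: assumes "s \<in> T" "t \<in> T" "s \<le> t" "m \<in> V s" shows "phi t (F s t m) = phi s m"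
proof -
  define n where "n = diag_index t"
  have tn: "t \<le> diag n" unfolding n_def by (rule le_diag_index)
  have sn: "s \<le> diag n" using assms(3) tn by (rule order.trans)
  show ?thesis
    unfolding phi_eq[OF assms(2) tn map_in[OF assms(1,2,3,4)]] phi_eq[OF assms(1) sn assms(4)]
      map_comp[OF assms(1,2) diag_in_T assms(3) tn assms(4)] ..
qed

lemma phi_out: assumes "s \<in> T" "s \<notin> J1 \<times> J2" "m \<in> V s" shows "phi s m = 0"
proof -
  define n where "n = diag_index s"
  have sn: "s \<le> diag n" unfolding n_def by (rule le_diag_index)
  have "F s (diag n) m \<in> Ndiag n" using map_to_Ndiag[OF assms(1) sn assms(2,3)] .
  moreover have "\<forall>m\<in>Ndiag n. fsel n m = 0" using fsel_Phi[of n] unfolding Phi_def by blast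
  ultimately show ?thesis unfolding phi_eq[OF assms(1) sn assms(3)] by blast
qed

lemma phi_z0: "phi (x', y') z0 = 1"
proof -
  have "phi (x', y') z0 = fsel 0 (F (x', y') (diag 0) z0)"
    using phi_eq[OF corner_in_T _ z0_props(3), of 0] diag_0 by simp
  also have "\<dots> = 1" using fsel_Phi[of 0] unfolding Phi_def by blast
  finally show ?thesis .
qed

lemma phi_edge_img: assumes "m \<in> edge_img x' y'" shows "phi (x', y') m = 0"
proof -
  obtain u w where uw: "u \<in> V (x, y')" "w \<in> V (x', y)" "m = F (x, y') (x', y') u + F (x', y) (x', y') w"
    using assms unfolding edge_img_def by blast
  have h: "(x, y') \<in> T" "(x', y) \<in> T" using quadrant square square_strict by auto
  have le: "(x, y') \<le> (x', y')" "(x', y) \<le> (x', y')" using square by auto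
  have "phi (x', y') m = phi (x', y') (F (x, y') (x', y') u) + phi (x', y') (F (x', y) (x', y') w)"
    using phi_lin[OF corner_in_T] map_in[OF h(1) corner_in_T le(1) uw(1)] map_in[OF h(2) corner_in_T le(2) uw(2)]
    unfolding uw(3) lin_on_def by blast
  also have "\<dots> = phi (x, y') u + phi (x', y) w"
    using phi_nat[OF h(1) corner_in_T le(1) uw(1)] phi_nat[OF h(2) corner_in_T le(2) uw(2)] by simp
  also have "\<dots> = 0"
    using phi_out[OF h(1) _ uw(1)] phi_out[OF h(2) _ uw(2)] x_notin_J1 y_notin_J2 by simp
  finally show ?thesis .
qed

lemma phi_block_surj:
  assumes "p \<in> J1" "q \<in> J2" "p \<le> x'" "q \<le> y'"
  shows "\<exists>m\<in>V (p, q). phi (p, q) m = 1"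
proof -
  obtain m where m: "m \<in> V (p, q)" "z0 - F (p, q) (x', y') m \<in> edge_img x' y'"
    using z0_in_reach[OF assms] unfolding reach_def by blast
  have hp: "(p, q) \<in> T" using quadrant J1_gt[OF assms(1)] J2_gt[OF assms(2)] by auto
  have le: "(p, q) \<le> (x', y')" using assms by auto
  have Fm: "F (p, q) (x', y') m \<in> V (x', y')" using map_in[OF hp corner_in_T le m(1)] .
  have "phi (x', y') (z0 - F (p, q) (x', y') m) = phi (x', y') z0 - phi (x', y') (F (p, q) (x', y') m)"
    by (rule vs.lin_on_diff[OF subspace_V[OF corner_in_T] phi_lin[OF corner_in_T] z0_props(3) Fm])
  hence "0 = 1 - phi (p, q) m" using phi_edge_img[OF m(2)] phi_z0 phi_nat[OF hp corner_in_T le m(1)] by simp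
  thus ?thesis using m(1) by auto
qed

section \<open>A natural section over the block\<close>

definition aseq :: "nat \<Rightarrow> real" where
  "aseq = (SOME a. decseq a \<and> (\<forall>n. a n \<in> J1 \<and> a n \<le> x') \<and> (\<forall>p\<in>J1. \<exists>n. a n \<le> p))"

definition bseq :: "nat \<Rightarrow> real" where
  "bseq = (SOME b. decseq b \<and> (\<forall>n. b n \<in> J2 \<and> b n \<le> y') \<and> (\<forall>q\<in>J2. \<exists>n. b n \<le> q))"

lemma aseq: "decseq aseq" "\<And>n. aseq n \<in> J1" "\<And>n. aseq n \<le> x'" "\<And>p. p \<in> J1 \<Longrightarrow> \<exists>n. aseq n \<le> p"
  using someI_ex[OF upclosed_decseq_coinitial[OF upclosed_J1 x'_in_J1 J1_gt]] unfolding aseq_def[symmetric]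
  by blast+

lemma bseq: "decseq bseq" "\<And>n. bseq n \<in> J2" "\<And>n. bseq n \<le> y'" "\<And>q. q \<in> J2 \<Longrightarrow> \<exists>n. bseq n \<le> q"
  using someI_ex[OF upclosed_decseq_coinitial[OF upclosed_J2 y'_in_J2 J2_gt]] unfolding bseq_def[symmetric]
  by blast+

definition low :: "nat \<Rightarrow> real \<times> real" where "low n = (aseq n, bseq n)"

lemma low_in_T: "low n \<in> T"
  unfolding low_def using quadrant J1_gt[OF aseq(2)] J2_gt[OF bseq(2)] by (simp add: less_imp_le)

lemma low_antimono: "n \<le> k \<Longrightarrow> low k \<le> low n"
  unfolding low_def using decseqD[OF aseq(1)] decseqD[OF bseq(1)] by simp

lemma low_coinitial:
  assumes "t \<in> J1 \<times> J2"
  shows "\<exists>n. low n \<le> t"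
proof -
  obtain a b where t: "t = (a, b)" "a \<in> J1" "b \<in> J2"
    using assms by auto
  obtain n1 n2 where "aseq n1 \<le> a" "bseq n2 \<le> b"
    using aseq(4)[OF t(2)] bseq(4)[OF t(3)] by blast
  then have "aseq (max n1 n2) \<le> a" "bseq (max n1 n2) \<le> b"
    using decseqD[OF aseq(1), of n1 "max n1 n2"] decseqD[OF bseq(1), of n2 "max n1 n2"] by auto
  then show ?thesis
    unfolding t low_def by (intro exI[of _ "max n1 n2"]) simp
qed

definition fiber1 :: "nat \<Rightarrow> 'v set" where "fiber1 n = {m \<in> V (low n). phi (low n) m = 1}"
definition down :: "nat \<Rightarrow> nat \<Rightarrow> 'v \<Rightarrow> 'v" where "down n k m = F (low k) (low n) m"

lemma down_fiber1: assumes "n \<le> k" "m \<in> fiber1 k" shows "down n k m \<in> fiber1 n"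
  using assms map_in[OF low_in_T low_in_T low_antimono[OF assms(1)]] phi_nat[OF low_in_T low_in_T low_antimono[OF assms(1)]]
  unfolding fiber1_def down_def by auto

lemma down_comp: assumes "n \<le> k" "k \<le> l" "m \<in> fiber1 l" shows "down n k (down k l m) = down n l m"
  using map_comp[OF low_in_T low_in_T low_in_T low_antimono[OF assms(2)] low_antimono[OF assms(1)]] assms(3)
  unfolding fiber1_def down_def by auto

lemma down_id: "m \<in> fiber1 n \<Longrightarrow> down n n m = m"
  unfolding fiber1_def down_def using map_id[OF low_in_T] by auto

lemma fiber1_nonempty: "fiber1 n \<noteq> {}"
  using phi_block_surj[OF aseq(2) bseq(2) aseq(3) bseq(3), of n n] unfolding fiber1_def low_def by blast

definition img :: "nat \<Rightarrow> nat \<Rightarrow> 'v set" where "img n k = F (low k) (low n) ` V (low k)"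

lemma img_sub: assumes "n \<le> k" shows "vs.subspace (img n k)" "img n k \<subseteq> V (low n)"
proof -
  have le: "low k \<le> low n" using low_antimono[OF assms] .
  have S: "vs.subspace (V (low k))" using subspace_V[OF low_in_T] .
  show "img n k \<subseteq> V (low n)" unfolding img_def using map_in[OF low_in_T low_in_T le] by blast
  show "vs.subspace (img n k)"
  proof (rule vs.subspaceI)
    show "0 \<in> img n k"
      unfolding img_def using map_zero[OF low_in_T low_in_T le] vs.subspace_0[OF S]
      by (metis image_eqI)
  next
    fix a b assume "a \<in> img n k" "b \<in> img n k"
    then obtain a' b' where ab: "a' \<in> V (low k)" "b' \<in> V (low k)" "a = F (low k) (low n) a'" "b = F (low k) (low n) b'"
      unfolding img_def by blast
    have "a + b = F (low k) (low n) (a' + b')" using map_add[OF low_in_T low_in_T le ab(1,2)] ab(3,4) by simp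
    thus "a + b \<in> img n k" unfolding img_def using vs.subspace_add[OF S ab(1,2)] by blast
  next
    fix c a assume "a \<in> img n k"
    then obtain a' where a: "a' \<in> V (low k)" "a = F (low k) (low n) a'" unfolding img_def by blast
    have "sc c a = F (low k) (low n) (sc c a')" using map_scale[OF low_in_T low_in_T le a(1)] a(2) by simp
    thus "sc c a \<in> img n k" unfolding img_def using vs.subspace_scale[OF S a(1)] by blast
  qed
qed

lemma img_antimono: assumes "n \<le> k" "k \<le> k'" shows "img n k' \<subseteq> img n k"
proof
  fix m assume "m \<in> img n k'"
  then obtain m' where m: "m' \<in> V (low k')" "m = F (low k') (low n) m'" unfolding img_def by blast
  have "m = F (low k) (low n) (F (low k') (low k) m')"
    using map_comp[OF low_in_T low_in_T low_in_T low_antimono[OF assms(2)] low_antimono[OF assms(1)] m(1)] m(2)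
    by simp
  thus "m \<in> img n k"
    unfolding img_def using map_in[OF low_in_T low_in_T low_antimono[OF assms(2)] m(1)] by blast
qed

lemma down_image: assumes "n \<le> k" shows "down n k ` fiber1 k = {m \<in> img n k. phi (low n) m = 1}"
proof
  have le: "low k \<le> low n" using low_antimono[OF assms] .
  show "down n k ` fiber1 k \<subseteq> {m \<in> img n k. phi (low n) m = 1}"
    using phi_nat[OF low_in_T low_in_T le] unfolding down_def fiber1_def img_def by auto
  show "{m \<in> img n k. phi (low n) m = 1} \<subseteq> down n k ` fiber1 k"
  proof
    fix m assume "m \<in> {m \<in> img n k. phi (low n) m = 1}"
    then obtain m' where m: "m' \<in> V (low k)" "m = F (low k) (low n) m'" "phi (low n) m = 1"
      unfolding img_def by blast
    have "phi (low k) m' = 1" using phi_nat[OF low_in_T low_in_T le m(1)] m(2,3) by simp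
    thus "m \<in> down n k ` fiber1 k" unfolding down_def fiber1_def using m(1,2) by blast
  qed
qed

lemma down_image_stable: "\<exists>k0\<ge>n. \<forall>k\<ge>k0. down n k ` fiber1 k = down n k0 ` fiber1 k0"
proof -
  obtain W where W: "finite W" "vs.span W = V (low n)"
    using finite_span_V[OF low_in_T] by blast
  have "\<exists>k0\<in>{n..}. \<forall>k\<in>{n..}. img n k0 \<subseteq> img n k"
  proof (rule vs.subspace_chain_has_least[OF _ _ _ W(1)])
    show "n \<in> {n..}"
      by simp
    show "vs.subspace (img n k)" "img n k \<subseteq> vs.span W" if "k \<in> {n..}" for k
      using img_sub[of n k] that W(2) by auto
    show "img n k \<subseteq> img n k' \<or> img n k' \<subseteq> img n k" if "k \<in> {n..}" "k' \<in> {n..}" for k k'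
      using img_antimono that by (metis atLeast_iff nat_le_linear)
  qed
  then obtain k0 where k0: "k0 \<ge> n" "\<And>k. k \<ge> n \<Longrightarrow> img n k0 \<subseteq> img n k"
    by auto
  have eq: "img n k = img n k0" if "k \<ge> k0" for k
    using k0(1) that by (intro subset_antisym k0(2) img_antimono[OF k0(1) that]) simp
  have "down n k ` fiber1 k = down n k0 ` fiber1 k0" if "k \<ge> k0" for k
    using down_image[of n k] down_image[of n k0] k0(1) that eq[OF that] by simp
  then show ?thesis
    using k0(1) by blast
qed

definition vsel :: "nat \<Rightarrow> 'v" where
  "vsel = (SOME sel. \<forall>n. sel n \<in> fiber1 n \<and> (\<forall>k\<ge>n. down n k (sel k) = sel n))"

lemma vsel_fiber1: "vsel n \<in> fiber1 n"
  and vsel_down: "n \<le> k \<Longrightarrow> down n k (vsel k) = vsel n"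
proof -
  have "\<exists>sel. \<forall>n. sel n \<in> fiber1 n \<and> (\<forall>k\<ge>n. down n k (sel k) = sel n)"
    using inverse_system_thread[where X=fiber1 and h=down] down_fiber1 down_comp down_id fiber1_nonempty
      down_image_stable
    by blast
  from someI_ex[OF this] show "vsel n \<in> fiber1 n" "n \<le> k \<Longrightarrow> down n k (vsel k) = vsel n"
    unfolding vsel_def[symmetric] by blast+
qed

abbreviation B :: "(real \<times> real) set" where "B \<equiv> J1 \<times> J2"

lemma block_in_T: "t \<in> B \<Longrightarrow> t \<in> T" using quadrant J1_gt J2_gt by (cases t) force

lemma block_up: "s \<in> B \<Longrightarrow> s \<le> t \<Longrightarrow> t \<in> B"
  using upclosed_J1 upclosed_J2 unfolding upclosed_def by (cases s, cases t) auto

lemma vsel_props: "vsel n \<in> V (low n)" "phi (low n) (vsel n) = 1"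
  using vsel_fiber1 unfolding fiber1_def by auto

definition low_index :: "real \<times> real \<Rightarrow> nat" where "low_index t = (SOME n. low n \<le> t)"
definition gen :: "real \<times> real \<Rightarrow> 'v" where "gen t = F (low (low_index t)) t (vsel (low_index t))"

lemma low_index: assumes "t \<in> B" shows "low (low_index t) \<le> t"
proof -
  have "\<exists>n. low n \<le> t" using low_coinitial[OF assms] .
  from someI_ex[OF this] show ?thesis unfolding low_index_def .
qed

lemma gen_move:
  assumes "t \<in> T" "low n \<le> t" "n \<le> K"
  shows "F (low n) t (vsel n) = F (low K) t (vsel K)"
proof -
  have "vsel n = F (low K) (low n) (vsel K)" using vsel_down[OF assms(3)] unfolding down_def by simp
  thus ?thesis
    using map_comp[OF low_in_T low_in_T assms(1) low_antimono[OF assms(3)] assms(2) vsel_props(1)]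
    by simp
qed

lemma gen_eq: assumes "t \<in> B" "low n \<le> t" shows "gen t = F (low n) t (vsel n)"
proof -
  define k where "k = low_index t"
  define K where "K = max n k"
  have t: "t \<in> T" using block_in_T[OF assms(1)] .
  have kt: "low k \<le> t" unfolding k_def using low_index[OF assms(1)] .
  have "gen t = F (low k) t (vsel k)" unfolding gen_def k_def ..
  also have "\<dots> = F (low K) t (vsel K)" using gen_move[OF t kt, of K] unfolding K_def by simp
  also have "\<dots> = F (low n) t (vsel n)" using gen_move[OF t assms(2), of K] unfolding K_def by simp
  finally show ?thesis .
qed

lemma gen_props: assumes "t \<in> B" shows "gen t \<in> V t" "phi t (gen t) = 1"
proof -
  have t: "t \<in> T" using block_in_T[OF assms] .
  have k: "low (low_index t) \<le> t" using low_index[OF assms] .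
  show "gen t \<in> V t" unfolding gen_def using map_in[OF low_in_T t k vsel_props(1)] .
  show "phi t (gen t) = 1"
    unfolding gen_def using phi_nat[OF low_in_T t k vsel_props(1)] vsel_props(2) by simp
qed

lemma gen_nat: assumes "s \<in> B" "s \<le> t" shows "F s t (gen s) = gen t"
proof -
  have t: "t \<in> B" using block_up[OF assms] .
  have st: "s \<in> T" "t \<in> T" using block_in_T assms(1) t by auto
  have k: "low (low_index s) \<le> s" using low_index[OF assms(1)] .
  have "F s t (gen s) = F (low (low_index s)) t (vsel (low_index s))"
    unfolding gen_def using map_comp[OF low_in_T st(1) st(2) k assms(2) vsel_props(1)] .
  also have "\<dots> = gen t" using gen_eq[OF t order.trans[OF k assms(2)]] by simp
  finally show ?thesis .
qed

lemma pmod_iso_block: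
  assumes "indecomposable sc T V F"
  shows "pmod_iso sc T V F (*) (kB_space B) (kB_map B)"
proof -
  have B: "B \<subseteq> T" "\<And>s t. s \<in> B \<Longrightarrow> t \<in> T \<Longrightarrow> s \<le> t \<Longrightarrow> t \<in> B" "(x', y') \<in> B"
    using block_in_T block_up x'_in_J1 y'_in_J2 by auto
  have gen_nat': "\<And>s t. s \<in> B \<Longrightarrow> t \<in> T \<Longrightarrow> s \<le> t \<Longrightarrow> F s t (gen s) = gen t"
    using gen_nat by blast
  have kernel: "\<forall>t\<in>T. {m \<in> V t. phi t m = 0} = {0}"
    by (rule natural_functional_kernel_trivial[OF assms B phi_lin phi_nat phi_out gen_props gen_nat'])
  have gen': "\<And>t. t \<in> B \<Longrightarrow> t \<in> T \<Longrightarrow> gen t \<in> V t \<and> phi t (gen t) = 1"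
    using gen_props by blast
  show ?thesis
    by (rule pmod_iso_kB_of_natural_functional[OF phi_lin phi_nat phi_out bspec[OF kernel] B(2) gen'])
qed

end

theorem lemma5p12:
  fixes sc :: "'k::field \<Rightarrow> 'v::ab_group_add \<Rightarrow> 'v"
    and V :: "real \<times> real \<Rightarrow> 'v set"
    and F :: "real \<times> real \<Rightarrow> real \<times> real \<Rightarrow> 'v \<Rightarrow> 'v"
    and T :: "(real \<times> real) set"
  defines "T \<equiv> {p. fst p + snd p > 0}"
  assumes "pmod sc T V F"
    and "pfd sc T V"
    and "middle_exact T V F"
    and "indecomposable sc T V F"
    and "\<exists>x x' y y'. x \<le> x' \<and> y \<le> y' \<and>
           (x, y) \<in> T \<and> (x, y') \<in> T \<and> (x', y) \<in> T \<and> (x', y') \<in> T \<and>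
           \<not> (\<forall>z\<in>V (x', y'). \<exists>u\<in>V (x, y'). \<exists>w\<in>V (x', y).
                  z = F (x, y') (x', y') u - F (x', y) (x', y') w)"
  shows "\<exists>J. block_bb J \<and>
           pmod_iso sc T V F (*) (kB_space (J \<inter> T)) (kB_map (J \<inter> T))"
proof -
  obtain x x' y y' z where sq: "x \<le> x'" "y \<le> y'" "(x, y) \<in> T" "z \<in> V (x', y')"
    and z_not_in_image: "\<not> (\<exists>u\<in>V (x, y'). \<exists>w\<in>V (x', y). z = F (x, y') (x', y') u - F (x', y) (x', y') w)"
    using assms(6) by blast
  have quadrant: "(p, q) \<in> T" if "x \<le> p" "y \<le> q" for p q
    using sq(3) that unfolding T_def by simp
  have "nonsurjective_square sc T V F x x' y y' z"
    unfolding nonsurjective_square_def nonsurjective_square_axioms_def persistence_module_def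
    using assms(2-4) sq(1,2,4) quadrant z_not_in_image by (intro conjI allI impI) auto
  then interpret nonsurjective_square sc T V F x x' y y' z .
  have "block_bb (J1 \<times> J2)"
    unfolding block_bb_def using x'_in_J1 y'_in_J2 upclosed_J1 upclosed_J2 by blast
  moreover have "J1 \<times> J2 \<inter> T = J1 \<times> J2"
    using block_in_T by blast
  ultimately show ?thesis
    using pmod_iso_block[OF assms(5)] by (intro exI[of _ "J1 \<times> J2"]) simp
qed

end
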